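(* Let $\mu$ be a non-zero (countably additive, non-negative, complete) measure on a $\sigma$-algebra $\Sigma$ of subsets of a set $\Omega$, and let $X$ be a Banach space. Suppose the following condition holds: whenever $x,y,z\in S_{L_1(\mu,X)}$ (as functions $\Omega\to X$) satisfy \[ \{\omega\in\Omega:\ \text{$x(\omega)\neq0$ and $y(\omega)=0$, or $x(\omega)=0$ and $y(\omega)\neq 0$}\}=\emptyset, \] and real numbers $\lambda,\nu\in(0,1)$ with $\lambda+\nu=1$ are such that $\lambda x+\nu y=z$ in $L_1(\mu,X)$, and $U$ and $V$ are neighbourhoods of $x$ and $y$, respectively, in the relative weak topology of $B_{L_1(\mu,X)}$, then there is a neighbourhood $W$ of $z$ in the relative weak topology of $B_{L_1(\mu,X)}$ with $W\subset\lambda U+\nu V$. Then $L_1(\mu,X)$ has property CWO-S.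
   Context: For a Banach space $Z$, $B_Z$ denotes its closed unit ball and $S_Z$ its unit sphere. $Z$ has property CWO-S if for every convex combination $C=\sum_{k=1}^m\lambda_kU_k$ ($\lambda_k>0$, $\sum_k\lambda_k=1$) of finitely many relatively weakly open subsets $U_k$ of $B_Z$, every $x\in C\cap S_Z$ is an interior point of $C$ in the relative weak topology of $B_Z$. *)

theory Defs
  imports "HOL-Analysis.Analysis"
begin

text \<open>We do not use the library Bochner integral, since it
  requires the target space to be second countable (i.e. X separable).\<close>
definition strongly_measurable :: "'a measure \<Rightarrow> ('a \<Rightarrow> 'b::real_normed_vector) \<Rightarrow> bool" where
  "strongly_measurable M f \<longleftrightarrow>
     (\<exists>s :: nat \<Rightarrow> 'a \<Rightarrow> 'b. (\<forall>n. simple_function M (s n)) \<and>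
        (AE \<omega> in M. (\<lambda>n. s n \<omega>) \<longlonglongrightarrow> f \<omega>))"

text \<open>Representatives of elements of L_1(mu, X).  Elements of L_1 are equivalence
  classes of these modulo almost-everywhere equality.\<close>
definition L1 :: "'a measure \<Rightarrow> ('a \<Rightarrow> 'b::real_normed_vector) set" where
  "L1 M = {f. strongly_measurable M f \<and> (\<integral>\<^sup>+ \<omega>. ennreal (norm (f \<omega>)) \<partial>M) < \<infinity>}"

definition L1norm :: "'a measure \<Rightarrow> ('a \<Rightarrow> 'b::real_normed_vector) \<Rightarrow> real" where
  "L1norm M f = enn2real (\<integral>\<^sup>+ \<omega>. ennreal (norm (f \<omega>)) \<partial>M)"

definition L1eq :: "'a measure \<Rightarrow> ('a \<Rightarrow> 'b) \<Rightarrow> ('a \<Rightarrow> 'b) \<Rightarrow> bool" where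
  "L1eq M f g \<longleftrightarrow> (AE \<omega> in M. f \<omega> = g \<omega>)"

definition L1ball :: "'a measure \<Rightarrow> ('a \<Rightarrow> 'b::real_normed_vector) set" where
  "L1ball M = {f \<in> L1 M. L1norm M f \<le> 1}"

definition L1sphere :: "'a measure \<Rightarrow> ('a \<Rightarrow> 'b::real_normed_vector) set" where
  "L1sphere M = {f \<in> L1 M. L1norm M f = 1}"

text \<open>The (topological) dual of L_1(mu, X): bounded linear functionals on L_1.
  (Boundedness forces them to respect almost-everywhere equality.)\<close>
definition L1dual :: "'a measure \<Rightarrow> (('a \<Rightarrow> 'b::real_normed_vector) \<Rightarrow> real) set" where
  "L1dual M = {\<phi>.
     (\<forall>f\<in>L1 M. \<forall>g\<in>L1 M. \<phi> (\<lambda>\<omega>. f \<omega> + g \<omega>) = \<phi> f + \<phi> g) \<and>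
     (\<forall>f\<in>L1 M. \<forall>c::real. \<phi> (\<lambda>\<omega>. c *\<^sub>R f \<omega>) = c * \<phi> f) \<and>
     (\<exists>C. \<forall>f\<in>L1 M. \<bar>\<phi> f\<bar> \<le> C * L1norm M f)}"

definition rel_weak_open :: "'a measure \<Rightarrow> ('a \<Rightarrow> 'b::real_normed_vector) set \<Rightarrow> bool" where
  "rel_weak_open M U \<longleftrightarrow> U \<subseteq> L1ball M \<and>
     (\<forall>f\<in>U. \<exists>F e. finite F \<and> F \<subseteq> L1dual M \<and> e > 0 \<and>
        {g \<in> L1ball M. \<forall>\<phi>\<in>F. \<bar>\<phi> g - \<phi> f\<bar> < e} \<subseteq> U)"

definition rel_weak_nhd :: "'a measure \<Rightarrow> ('a \<Rightarrow> 'b::real_normed_vector) set \<Rightarrow> ('a \<Rightarrow> 'b) \<Rightarrow> bool" where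
  "rel_weak_nhd M N f \<longleftrightarrow> N \<subseteq> L1ball M \<and> (\<exists>G. rel_weak_open M G \<and> f \<in> G \<and> G \<subseteq> N)"

text \<open>A set of representatives is saturated if it is closed under a.e. equality;
  saturated sets correspond bijectively to subsets of L_1(mu, X).\<close>
definition L1saturated :: "'a measure \<Rightarrow> ('a \<Rightarrow> 'b::real_normed_vector) set \<Rightarrow> bool" where
  "L1saturated M N \<longleftrightarrow> (\<forall>f\<in>N. \<forall>g\<in>L1 M. L1eq M g f \<longrightarrow> g \<in> N)"

definition L1comb :: "'a measure \<Rightarrow> nat \<Rightarrow> (nat \<Rightarrow> real) \<Rightarrow> (nat \<Rightarrow> ('a \<Rightarrow> 'b::real_normed_vector) set)
     \<Rightarrow> ('a \<Rightarrow> 'b) set" where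
  "L1comb M m lam U = {w \<in> L1 M. \<exists>u. (\<forall>k<m. u k \<in> U k) \<and>
       L1eq M w (\<lambda>\<omega>. \<Sum>k<m. lam k *\<^sub>R u k \<omega>)}"

definition L1_CWO_S :: "'a measure \<Rightarrow> ('a \<Rightarrow> 'b::real_normed_vector) itself \<Rightarrow> bool" where
  "L1_CWO_S M _ \<longleftrightarrow>
     (\<forall>m lam (U :: nat \<Rightarrow> ('a \<Rightarrow> 'b) set).
        (\<forall>k<m. lam k > 0) \<and> (\<Sum>k<m. lam k) = 1 \<and> (\<forall>k<m. rel_weak_open M (U k)) \<longrightarrow>
        (\<forall>x \<in> L1comb M m lam U \<inter> L1sphere M.
           \<exists>G. rel_weak_open M G \<and> x \<in> G \<and> G \<subseteq> L1comb M m lam U))"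

end

theory Submission
  imports Defs
begin

text \<open>Let x = lam u + nu v have norm one, with u and v in the unit ball; then u and v have norm
  one. Split the space into A, where only u is non-zero, B, where only v is non-zero, and the
  rest E, where u and v have the same support. For w in the unit ball weakly close to x, the
  norms of the restrictions of w to A, B and E are close to those of x: each of them is weakly
  lower semicontinuous (by Hahn-Banach), and they add up to at most one, as they do for x. Hence
  w splits as lam a + nu b with a and b weakly close to u and v: on A and on B trivially, on E by
  the hypothesis applied to the normalised restrictions of u, v and x to E. The norms of a and b
  may exceed one slightly; shifting a small multiple of one of them to the other moves both into
  the unit ball without changing the combination. Finitely many sets are handled by induction,
  grouping all but the last one.\<close>

section \<open>Norming functionals\<close>

text \<open>Partial linear functionals are encoded by their graphs, so that Zorn's lemma applies to
  set inclusion.\<close>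
definition dominated_graph :: "'b::real_normed_vector \<Rightarrow> ('b \<times> real) set \<Rightarrow> bool" where
  "dominated_graph c G \<longleftrightarrow>
     (\<forall>x a y b. (x, a) \<in> G \<longrightarrow> (y, b) \<in> G \<longrightarrow> (x + y, a + b) \<in> G) \<and>
     (\<forall>x a r. (x, a) \<in> G \<longrightarrow> (r *\<^sub>R x, r * a) \<in> G) \<and>
     (\<forall>x a. (x, a) \<in> G \<longrightarrow> a \<le> norm x) \<and> (c, norm c) \<in> G"

lemma dominated_graph_unique:
  assumes "dominated_graph c G" "(x, a) \<in> G" "(x, b) \<in> G"
  shows "a = b"
proof -
  have "a' - b' \<le> 0" if "(x, a') \<in> G" "(x, b') \<in> G" for a' b'
  proof -
    have "((-1) *\<^sub>R x, (-1) * b') \<in> G" using assms(1) that(2) unfolding dominated_graph_def by blast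
    then have "(x + (-1) *\<^sub>R x, a' + (-1) * b') \<in> G"
      using assms(1) that(1) unfolding dominated_graph_def by blast
    then have "a' + (-1) * b' \<le> norm (x + (-1) *\<^sub>R x)" using assms(1) unfolding dominated_graph_def by blast
    then show ?thesis by simp
  qed
  from this[OF assms(2,3)] this[OF assms(3,2)] show ?thesis by simp
qed

lemma dominated_graph_zero: "dominated_graph c G \<Longrightarrow> (0, 0) \<in> G"
  unfolding dominated_graph_def by (metis mult_zero_left scaleR_zero_left)

lemma dominated_graph_extend_bound:
  fixes c :: "'b::real_normed_vector"
  assumes G: "dominated_graph c G" and xa: "(x, a) \<in> G"
    and k_lower: "\<And>x a. (x, a) \<in> G \<Longrightarrow> a - norm (x - y) \<le> k"
    and k_upper: "\<And>x a. (x, a) \<in> G \<Longrightarrow> k \<le> norm (x + y) - a"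
  shows "a + r * k \<le> norm (x + r *\<^sub>R y)"
proof -
  have scl: "(t *\<^sub>R x, t * a) \<in> G" for t
    using G xa unfolding dominated_graph_def by blast
  consider "r > 0" | "r = 0" | "r < 0" by linarith
  then show ?thesis
  proof cases
    case 1
    have "k \<le> norm ((1/r) *\<^sub>R x + y) - (1/r) * a" using k_upper[OF scl] .
    then have "r * k \<le> r * (norm ((1/r) *\<^sub>R x + y) - (1/r) * a)"
      using 1 by (simp add: mult_left_mono)
    also have "r * (norm ((1/r) *\<^sub>R x + y) - (1/r) * a) = norm (r *\<^sub>R ((1/r) *\<^sub>R x + y)) - a"
      using 1 by (simp add: right_diff_distrib)
    also have "r *\<^sub>R ((1/r) *\<^sub>R x + y) = x + r *\<^sub>R y"
      using 1 by (simp add: scaleR_add_right)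
    finally show ?thesis by (simp add: algebra_simps)
  next
    case 2
    then show ?thesis using G xa unfolding dominated_graph_def by simp
  next
    case 3
    have "(1/(-r)) * a - norm ((1/(-r)) *\<^sub>R x - y) \<le> k" using k_lower[OF scl] .
    then have "(-r) * ((1/(-r)) * a - norm ((1/(-r)) *\<^sub>R x - y)) \<le> (-r) * k"
      using 3 by (simp add: mult_left_mono)
    also have "(-r) * ((1/(-r)) * a - norm ((1/(-r)) *\<^sub>R x - y)) = a - norm ((-r) *\<^sub>R ((1/(-r)) *\<^sub>R x - y))"
      using 3 by (simp add: right_diff_distrib)
    also have "(-r) *\<^sub>R ((1/(-r)) *\<^sub>R x - y) = x + r *\<^sub>R y"
      using 3 by (simp add: scaleR_diff_right)
    finally show ?thesis by simp
  qed
qed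

lemma dominated_graph_extend_by:
  fixes c :: "'b::real_normed_vector"
  assumes G: "dominated_graph c G"
    and k_lower: "\<And>x a. (x, a) \<in> G \<Longrightarrow> a - norm (x - y) \<le> k"
    and k_upper: "\<And>x a. (x, a) \<in> G \<Longrightarrow> k \<le> norm (x + y) - a"
  defines "G' \<equiv> (\<lambda>((x, a), r). (x + r *\<^sub>R y, a + r * k)) ` (G \<times> UNIV)"
  shows "dominated_graph c G'"
proof -
  have add: "(x + x', a + a') \<in> G" if "(x, a) \<in> G" "(x', a') \<in> G" for x a x' a'
    using G that unfolding dominated_graph_def by blast
  have scl: "(r *\<^sub>R x, r * a) \<in> G" if "(x, a) \<in> G" for x a r
    using G that unfolding dominated_graph_def by blast
  have memG': "(x + r *\<^sub>R y, a + r * k) \<in> G'" if "(x, a) \<in> G" for x a r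
    unfolding G'_def using that by (intro image_eqI[of _ _ "((x, a), r)"]) auto
  have elG': "\<exists>x1 a1 r1. (x1, a1) \<in> G \<and> x = x1 + r1 *\<^sub>R y \<and> a = a1 + r1 * k" if "(x, a) \<in> G'" for x a
    using that unfolding G'_def by auto
  show ?thesis
    unfolding dominated_graph_def
  proof (intro conjI allI impI)
    fix x a x' a'
    assume "(x, a) \<in> G'" "(x', a') \<in> G'"
    then obtain x1 a1 r1 x2 a2 r2 where h: "(x1, a1) \<in> G" "(x2, a2) \<in> G"
      "x = x1 + r1 *\<^sub>R y" "a = a1 + r1 * k" "x' = x2 + r2 *\<^sub>R y" "a' = a2 + r2 * k"
      using elG' by metis
    have "((x1 + x2) + (r1 + r2) *\<^sub>R y, (a1 + a2) + (r1 + r2) * k) \<in> G'"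
      by (rule memG') (rule add[OF h(1,2)])
    moreover have "x + x' = (x1 + x2) + (r1 + r2) *\<^sub>R y" "a + a' = (a1 + a2) + (r1 + r2) * k"
      using h by (simp_all add: algebra_simps)
    ultimately show "(x + x', a + a') \<in> G'" by simp
  next
    fix x a r
    assume "(x, a) \<in> G'"
    then obtain x1 a1 r1 where h: "(x1, a1) \<in> G" "x = x1 + r1 *\<^sub>R y" "a = a1 + r1 * k"
      using elG' by metis
    have "(r *\<^sub>R x1 + (r * r1) *\<^sub>R y, r * a1 + (r * r1) * k) \<in> G'"
      by (rule memG') (rule scl[OF h(1)])
    moreover have "r *\<^sub>R x = r *\<^sub>R x1 + (r * r1) *\<^sub>R y" "r * a = r * a1 + (r * r1) * k"
      using h by (simp_all add: algebra_simps)
    ultimately show "(r *\<^sub>R x, r * a) \<in> G'" by simp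
  next
    fix x a
    assume "(x, a) \<in> G'"
    then obtain x1 a1 r where xa: "(x1, a1) \<in> G" "x = x1 + r *\<^sub>R y" "a = a1 + r * k"
      using elG' by metis
    then show "a \<le> norm x" using dominated_graph_extend_bound[OF G xa(1) k_lower k_upper] by simp
  next
    show "(c, norm c) \<in> G'" using memG'[of c "norm c" 0] G unfolding dominated_graph_def by simp
  qed
qed

text \<open>The one-step extension of Hahn and Banach: the value k at the new vector y is squeezed
  between the supremum of a - norm (x - y) and the infimum of norm (x + y) - a over (x, a) in G.\<close>
lemma dominated_graph_extend:
  fixes c :: "'b::real_normed_vector"
  assumes G: "dominated_graph c G" and y: "y \<notin> fst ` G"
  shows "\<exists>G'. dominated_graph c G' \<and> G \<subset> G'"
proof -
  have bnd: "a \<le> norm x" if "(x, a) \<in> G" for x a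
    using G that unfolding dominated_graph_def by blast
  define S where "S = {a - norm (x - y) | x a. (x, a) \<in> G}"
  define k where "k = Sup S"
  have S_ne: "S \<noteq> {}" using dominated_graph_zero[OF G] unfolding S_def by blast
  have S_bdd: "bdd_above S" unfolding S_def bdd_above_def
  proof (intro exI[of _ "norm y"] ballI)
    fix s
    assume "s \<in> {a - norm (x - y) | x a. (x, a) \<in> G}"
    then obtain x a where "s = a - norm (x - y)" "(x, a) \<in> G" by blast
    moreover have "norm x \<le> norm (x - y) + norm y" by (metis norm_triangle_sub add.commute)
    ultimately show "s \<le> norm y" using bnd by fastforce
  qed
  have "dominated_graph c ((\<lambda>((x, a), r). (x + r *\<^sub>R y, a + r * k)) ` (G \<times> UNIV))"
  proof (rule dominated_graph_extend_by[OF G])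
    show "a - norm (x - y) \<le> k" if "(x, a) \<in> G" for x a
      unfolding k_def using that by (intro cSup_upper S_bdd) (auto simp: S_def)
    show "k \<le> norm (x + y) - a" if "(x, a) \<in> G" for x a
      unfolding k_def
    proof (rule cSup_least[OF S_ne])
      fix s
      assume "s \<in> S"
      then obtain x' a' where s: "s = a' - norm (x' - y)" "(x', a') \<in> G" unfolding S_def by blast
      have "(x' + x, a' + a) \<in> G" using G s(2) that unfolding dominated_graph_def by blast
      then have "a' + a \<le> norm (x' + x)" by (rule bnd)
      also have "\<dots> \<le> norm (x' - y) + norm (x + y)"
        using norm_triangle_ineq[of "x' - y" "x + y"] by simp
      finally show "s \<le> norm (x + y) - a" using s by simp
    qed
  qed
  moreover have "G \<subseteq> (\<lambda>((x, a), r). (x + r *\<^sub>R y, a + r * k)) ` (G \<times> UNIV)"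
  proof safe
    fix x a
    assume "(x, a) \<in> G"
    then show "(x, a) \<in> (\<lambda>((x, a), r). (x + r *\<^sub>R y, a + r * k)) ` (G \<times> UNIV)"
      by (intro image_eqI[of _ _ "((x, a), 0)"]) auto
  qed
  moreover have "(y, k) \<in> (\<lambda>((x, a), r). (x + r *\<^sub>R y, a + r * k)) ` (G \<times> UNIV)"
    using dominated_graph_zero[OF G] by (intro image_eqI[of _ _ "((0, 0), 1)"]) auto
  moreover have "(y, k) \<notin> G" using y by (metis fst_conv image_eqI)
  ultimately show ?thesis by blast
qed

lemma dominated_graph_line: "dominated_graph c (range (\<lambda>r. (r *\<^sub>R c, r * norm c)))"
  unfolding dominated_graph_def
proof (intro conjI allI impI)
  fix x a y b
  assume "(x, a) \<in> range (\<lambda>r. (r *\<^sub>R c, r * norm c))" "(y, b) \<in> range (\<lambda>r. (r *\<^sub>R c, r * norm c))"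
  then obtain r s where "x = r *\<^sub>R c" "a = r * norm c" "y = s *\<^sub>R c" "b = s * norm c" by auto
  then show "(x + y, a + b) \<in> range (\<lambda>r. (r *\<^sub>R c, r * norm c))"
    by (intro image_eqI[of _ _ "r + s"]) (simp_all add: algebra_simps)
next
  fix x a r
  assume "(x, a) \<in> range (\<lambda>r. (r *\<^sub>R c, r * norm c))"
  then obtain s where "x = s *\<^sub>R c" "a = s * norm c" by auto
  then show "(r *\<^sub>R x, r * a) \<in> range (\<lambda>r. (r *\<^sub>R c, r * norm c))"
    by (intro image_eqI[of _ _ "r * s"]) simp_all
next
  fix x a
  assume "(x, a) \<in> range (\<lambda>r. (r *\<^sub>R c, r * norm c))"
  then obtain s where "x = s *\<^sub>R c" "a = s * norm c" by auto
  then show "a \<le> norm x" by (simp add: mult_right_mono)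
next
  show "(c, norm c) \<in> range (\<lambda>r. (r *\<^sub>R c, r * norm c))" by (intro image_eqI[of _ _ 1]) simp_all
qed

lemma dominated_graph_Union_chain:
  assumes ne: "C \<noteq> {}" and chain: "subset.chain {G. dominated_graph c G} C"
  shows "dominated_graph c (\<Union>C)"
proof -
  have CA: "\<And>G. G \<in> C \<Longrightarrow> dominated_graph c G"
    and comparable: "\<And>X Y. X \<in> C \<Longrightarrow> Y \<in> C \<Longrightarrow> X \<subseteq> Y \<or> Y \<subseteq> X"
    using chain unfolding subset.chain_def by auto
  show ?thesis unfolding dominated_graph_def
  proof (intro conjI allI impI)
    fix x a y b
    assume "(x, a) \<in> \<Union>C" "(y, b) \<in> \<Union>C"
    then obtain X Y where XY: "X \<in> C" "Y \<in> C" "(x, a) \<in> X" "(y, b) \<in> Y" by blast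
    then have "(x, a) \<in> X \<union> Y" "(y, b) \<in> X \<union> Y" "X \<union> Y \<in> C"
      using comparable[OF XY(1,2)] by (auto simp: sup.absorb1 sup.absorb2)
    moreover have "dominated_graph c (X \<union> Y)" using CA \<open>X \<union> Y \<in> C\<close> by blast
    ultimately show "(x + y, a + b) \<in> \<Union>C" unfolding dominated_graph_def by blast
  next
    fix x a r
    assume "(x, a) \<in> \<Union>C"
    then show "(r *\<^sub>R x, r * a) \<in> \<Union>C" using CA unfolding dominated_graph_def by blast
  next
    fix x a
    assume "(x, a) \<in> \<Union>C"
    then show "a \<le> norm x" using CA unfolding dominated_graph_def by blast
  next
    show "(c, norm c) \<in> \<Union>C" using ne CA unfolding dominated_graph_def by blast
  qed
qed

lemma norming_functional_exists:
  fixes c :: "'b::real_normed_vector"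
  shows "\<exists>\<psi>. linear \<psi> \<and> (\<forall>y. \<bar>\<psi> y\<bar> \<le> norm y) \<and> \<psi> c = norm c"
proof -
  obtain G where G: "dominated_graph c G" "\<forall>X. dominated_graph c X \<longrightarrow> G \<subseteq> X \<longrightarrow> X = G"
    using subset_Zorn_nonempty[of "{G. dominated_graph c G}"] dominated_graph_line[of c]
      dominated_graph_Union_chain by blast
  have total: "\<exists>a. (y, a) \<in> G" for y
    using dominated_graph_extend[OF G(1), of y] G(2) by force
  define \<psi> where "\<psi> y = (THE a. (y, a) \<in> G)" for y
  have graph: "(y, \<psi> y) \<in> G" for y
    unfolding \<psi>_def using total[of y] dominated_graph_unique[OF G(1)] by (metis theI)
  have add: "\<psi> (x + y) = \<psi> x + \<psi> y" for x y
    using G(1) graph[of x] graph[of y] graph[of "x + y"] dominated_graph_unique[OF G(1)]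
    unfolding dominated_graph_def by blast
  have scale: "\<psi> (r *\<^sub>R x) = r * \<psi> x" for r x
    using G(1) graph[of x] graph[of "r *\<^sub>R x"] dominated_graph_unique[OF G(1)]
    unfolding dominated_graph_def by blast
  have le: "\<psi> y \<le> norm y" for y using G(1) graph[of y] unfolding dominated_graph_def by blast
  have "linear \<psi>" by (rule linearI) (auto simp: add scale)
  moreover have "\<bar>\<psi> y\<bar> \<le> norm y" for y
    using le[of y] le[of "(-1) *\<^sub>R y"] scale[of "-1" y] by (simp add: abs_le_iff)
  moreover have "\<psi> c = norm c" using G(1) graph[of c] dominated_graph_unique[OF G(1)]
    unfolding dominated_graph_def by blast
  ultimately show ?thesis by blast
qed

definition norming_functional :: "'b::real_normed_vector \<Rightarrow> 'b \<Rightarrow> real" where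
  "norming_functional c = (SOME \<psi>. linear \<psi> \<and> (\<forall>y. \<bar>\<psi> y\<bar> \<le> norm y) \<and> \<psi> c = norm c)"

lemma norming_functional:
  "linear (norming_functional c)" "\<bar>norming_functional c y\<bar> \<le> norm y" "norming_functional c c = norm c"
  using someI_ex[OF norming_functional_exists[of c]] unfolding norming_functional_def by auto

lemma bounded_linear_norming_functional: "bounded_linear (norming_functional c)"
  by (intro bounded_linear_intro[where K=1])
    (auto simp: linear_add[OF norming_functional(1)] linear_scale[OF norming_functional(1)]
      norming_functional(2))

lemma borel_measurable_norming_functional_simple:
  assumes s: "simple_function M s" and g: "g \<in> borel_measurable M"
  shows "(\<lambda>\<omega>. norming_functional (s \<omega>) (g \<omega>)) \<in> borel_measurable M"
proof -
  let ?level = "\<lambda>c. s -` {c} \<inter> space M"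
  have "(\<lambda>\<omega>. \<Sum>c\<in>s ` space M. indicator (?level c) \<omega> * norming_functional c (g \<omega>)) \<in> borel_measurable M"
  proof (rule borel_measurable_sum)
    fix c
    have "?level c \<in> sets M" using simple_functionD(2)[OF s] by auto
    moreover have "(\<lambda>\<omega>. norming_functional c (g \<omega>)) \<in> borel_measurable M"
      using g by (rule borel_measurable_continuous_on[OF linear_continuous_on[OF bounded_linear_norming_functional]])
    ultimately show "(\<lambda>\<omega>. indicator (?level c) \<omega> * norming_functional c (g \<omega>)) \<in> borel_measurable M"
      by (intro borel_measurable_times) auto
  qed
  moreover have "(\<Sum>c\<in>s ` space M. indicator (?level c) \<omega> * norming_functional c (g \<omega>))
      = norming_functional (s \<omega>) (g \<omega>)" if "\<omega> \<in> space M" for \<omega>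
  proof -
    have "(\<Sum>c\<in>s ` space M. indicator (?level c) \<omega> * norming_functional c (g \<omega>))
        = (\<Sum>c\<in>s ` space M. if s \<omega> = c then norming_functional c (g \<omega>) else 0)"
      using that by (intro sum.cong) (auto simp: indicator_def)
    also have "\<dots> = norming_functional (s \<omega>) (g \<omega>)"
      using that simple_functionD(1)[OF s] by (subst sum.delta') auto
    finally show ?thesis .
  qed
  ultimately show ?thesis by (simp cong: measurable_cong)
qed

definition zero_outside :: "'a set \<Rightarrow> ('a \<Rightarrow> 'b::real_normed_vector) \<Rightarrow> 'a \<Rightarrow> 'b" where
  "zero_outside S f = (\<lambda>\<omega>. indicator S \<omega> *\<^sub>R f \<omega>)"

definition L1normalize :: "'a measure \<Rightarrow> ('a \<Rightarrow> 'b::real_normed_vector) \<Rightarrow> 'a \<Rightarrow> 'b" where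
  "L1normalize M f = (\<lambda>\<omega>. (1 / L1norm M f) *\<^sub>R f \<omega>)"

lemma zero_outside_add: "zero_outside S (\<lambda>\<omega>. f \<omega> + g \<omega>) = (\<lambda>\<omega>. zero_outside S f \<omega> + zero_outside S g \<omega>)"
  unfolding zero_outside_def by (simp add: scaleR_add_right)

lemma zero_outside_scaleR: "zero_outside S (\<lambda>\<omega>. c *\<^sub>R f \<omega>) = (\<lambda>\<omega>. c *\<^sub>R zero_outside S f \<omega>)"
  unfolding zero_outside_def by (simp add: ac_simps)

lemma strongly_measurable_simple: "simple_function M s \<Longrightarrow> strongly_measurable M s"
  unfolding strongly_measurable_def by (intro exI[of _ "\<lambda>n. s"]) auto

lemma strongly_measurable_add:
  assumes "strongly_measurable M f" "strongly_measurable M g"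
  shows "strongly_measurable M (\<lambda>\<omega>. f \<omega> + g \<omega>)"
proof -
  obtain s where s: "\<And>n. simple_function M (s n)" "AE \<omega> in M. (\<lambda>n. s n \<omega>) \<longlonglongrightarrow> f \<omega>"
    using assms(1) unfolding strongly_measurable_def by blast
  obtain t where t: "\<And>n. simple_function M (t n)" "AE \<omega> in M. (\<lambda>n. t n \<omega>) \<longlonglongrightarrow> g \<omega>"
    using assms(2) unfolding strongly_measurable_def by blast
  have "AE \<omega> in M. (\<lambda>n. s n \<omega> + t n \<omega>) \<longlonglongrightarrow> f \<omega> + g \<omega>"
    using s(2) t(2) by eventually_elim (rule tendsto_add)
  then show ?thesis unfolding strongly_measurable_def
    by (intro exI[of _ "\<lambda>n \<omega>. s n \<omega> + t n \<omega>"] conjI allI simple_function_compose2[OF s(1) t(1)])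
qed

lemma strongly_measurable_scaleR:
  assumes "strongly_measurable M (f :: 'a \<Rightarrow> 'b::real_normed_vector)" "simple_function M c"
  shows "strongly_measurable M (\<lambda>\<omega>. c \<omega> *\<^sub>R f \<omega>)"
proof -
  obtain s where s: "\<And>n. simple_function M (s n)" "AE \<omega> in M. (\<lambda>n. s n \<omega>) \<longlonglongrightarrow> f \<omega>"
    using assms(1) unfolding strongly_measurable_def by blast
  have "AE \<omega> in M. (\<lambda>n. c \<omega> *\<^sub>R s n \<omega>) \<longlonglongrightarrow> c \<omega> *\<^sub>R f \<omega>"
    using s(2) by eventually_elim (intro tendsto_intros)
  then show ?thesis unfolding strongly_measurable_def
    by (intro exI[of _ "\<lambda>n \<omega>. c \<omega> *\<^sub>R s n \<omega>"] conjI allI simple_function_compose2[OF assms(2) s(1)])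
qed

lemma strongly_measurable_diff:
  assumes "strongly_measurable M f" "strongly_measurable M g"
  shows "strongly_measurable M (\<lambda>\<omega>. f \<omega> - g \<omega>)"
  using strongly_measurable_add[OF assms(1) strongly_measurable_scaleR[OF assms(2), of "\<lambda>_. -1"]] by simp

lemma strongly_measurable_AE_cong:
  assumes "strongly_measurable M f" "AE \<omega> in M. f \<omega> = g \<omega>"
  shows "strongly_measurable M g"
proof -
  obtain s where s: "\<And>n. simple_function M (s n)" "AE \<omega> in M. (\<lambda>n. s n \<omega>) \<longlonglongrightarrow> f \<omega>"
    using assms(1) unfolding strongly_measurable_def by blast
  have "AE \<omega> in M. (\<lambda>n. s n \<omega>) \<longlonglongrightarrow> g \<omega>"
    using s(2) assms(2) by eventually_elim simp
  then show ?thesis unfolding strongly_measurable_def using s(1) by blast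
qed

lemma L1norm_nonneg: "0 \<le> L1norm M f"
  unfolding L1norm_def by simp

lemma L1norm_AE_zero: "AE \<omega> in M. f \<omega> = 0 \<Longrightarrow> L1norm M f = 0"
  unfolding L1norm_def by (subst nn_integral_cong_AE[where v="\<lambda>_. 0"]) (auto elim: eventually_mono)

lemma L1ball_imp_L1: "f \<in> L1ball M \<Longrightarrow> f \<in> L1 M"
  unfolding L1ball_def by blast

lemma L1ball_imp_L1norm_le: "f \<in> L1ball M \<Longrightarrow> L1norm M f \<le> 1"
  unfolding L1ball_def by blast

lemma L1sphere_norm: "f \<in> L1sphere M \<Longrightarrow> L1norm M f = 1"
  unfolding L1sphere_def by blast

lemma L1sphere_subset_L1ball: "L1sphere M \<subseteq> L1ball M"
  unfolding L1sphere_def L1ball_def by auto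

context
  fixes M :: "'a measure"
  assumes complete: "complete_measure M"
begin

text \<open>Completeness is what makes an a.e. limit of simple functions measurable.\<close>
lemma borel_measurable_strongly_measurable:
  fixes f :: "'a \<Rightarrow> 'b::real_normed_vector"
  assumes "strongly_measurable M f"
  shows "f \<in> borel_measurable M"
proof -
  obtain s where s: "\<And>n. simple_function M (s n)" "AE \<omega> in M. (\<lambda>n. s n \<omega>) \<longlonglongrightarrow> f \<omega>"
    using assms unfolding strongly_measurable_def by blast
  obtain N where N: "{\<omega>\<in>space M. \<not> (\<lambda>n. s n \<omega>) \<longlonglongrightarrow> f \<omega>} \<subseteq> N" "emeasure M N = 0" "N \<in> sets M"
    using s(2) by (rule AE_E)
  define g where "g \<omega> = (if \<omega> \<in> N then 0 else f \<omega>)" for \<omega>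
  have g: "g \<in> borel_measurable M"
  proof (rule borel_measurable_LIMSEQ_metric)
    show "(\<lambda>\<omega>. if \<omega> \<in> N then 0 else s i \<omega>) \<in> borel_measurable M" for i
      using borel_measurable_simple_function[OF s(1)] N(3) by (intro measurable_If_set) auto
    show "(\<lambda>i. if \<omega> \<in> N then 0 else s i \<omega>) \<longlonglongrightarrow> g \<omega>" if "\<omega> \<in> space M" for \<omega>
      using N(1) that by (auto simp: g_def)
  qed
  show ?thesis
  proof (rule borel_measurableI)
    fix S :: "'b set"
    assume "open S"
    have "g -` S \<inter> space M \<in> sets M" using measurable_sets[OF g borel_open[OF \<open>open S\<close>]] .
    moreover have "f -` S \<inter> space M \<inter> N \<in> sets M"
      using N(2,3) by (intro complete_measure.complete[OF complete, of _ N]) auto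
    ultimately have "(g -` S \<inter> space M - N) \<union> (f -` S \<inter> space M \<inter> N) \<in> sets M"
      using N(3) by (intro sets.Un sets.Diff)
    moreover have "f -` S \<inter> space M = (g -` S \<inter> space M - N) \<union> (f -` S \<inter> space M \<inter> N)"
      by (auto simp: g_def)
    ultimately show "f -` S \<inter> space M \<in> sets M" by simp
  qed
qed

lemma L1_imp_borel: "f \<in> L1 M \<Longrightarrow> f \<in> borel_measurable M"
  unfolding L1_def using borel_measurable_strongly_measurable by blast

lemma L1_iff_integrable_norm:
  "f \<in> L1 M \<longleftrightarrow> strongly_measurable M f \<and> integrable M (\<lambda>\<omega>. norm (f \<omega>))"
proof -
  have "integrable M (\<lambda>\<omega>. norm (f \<omega>)) \<longleftrightarrow> (\<integral>\<^sup>+ \<omega>. ennreal (norm (f \<omega>)) \<partial>M) < \<infinity>"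
    if "strongly_measurable M f"
    using borel_measurable_strongly_measurable[OF that] by (simp add: integrable_iff_bounded)
  then show ?thesis unfolding L1_def by blast
qed

lemma L1_integrable_norm: "f \<in> L1 M \<Longrightarrow> integrable M (\<lambda>\<omega>. norm (f \<omega>))"
  using L1_iff_integrable_norm by blast

lemma L1_imp_strongly_measurable: "f \<in> L1 M \<Longrightarrow> strongly_measurable M f"
  using L1_iff_integrable_norm by blast

lemma L1norm_eq_integral: "f \<in> L1 M \<Longrightarrow> L1norm M f = (\<integral>\<omega>. norm (f \<omega>) \<partial>M)"
  unfolding L1norm_def using L1_imp_borel[of f]
  by (intro enn2real_nn_integral_eq_integral) auto

lemma L1I_bound:
  assumes "strongly_measurable M f" "integrable M g" "AE \<omega> in M. norm (f \<omega>) \<le> g \<omega>"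
  shows "f \<in> L1 M"
proof -
  have "integrable M (\<lambda>\<omega>. norm (f \<omega>))"
  proof (rule Bochner_Integration.integrable_bound[OF assms(2)])
    show "(\<lambda>\<omega>. norm (f \<omega>)) \<in> borel_measurable M"
      using borel_measurable_strongly_measurable[OF assms(1)] by measurable
    show "AE \<omega> in M. norm (norm (f \<omega>)) \<le> norm (g \<omega>)"
      using assms(3) by eventually_elim auto
  qed
  then show ?thesis using assms(1) unfolding L1_iff_integrable_norm by blast
qed

lemma L1_add: "f \<in> L1 M \<Longrightarrow> g \<in> L1 M \<Longrightarrow> (\<lambda>\<omega>. f \<omega> + g \<omega>) \<in> L1 M"
  by (rule L1I_bound[where g="\<lambda>\<omega>. norm (f \<omega>) + norm (g \<omega>)"])
    (auto intro: strongly_measurable_add L1_imp_strongly_measurable L1_integrable_norm norm_triangle_ineq)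

lemma L1_scaleR: "f \<in> L1 M \<Longrightarrow> (\<lambda>\<omega>. c *\<^sub>R f \<omega>) \<in> L1 M"
  by (rule L1I_bound[where g="\<lambda>\<omega>. \<bar>c\<bar> * norm (f \<omega>)"])
    (auto intro: strongly_measurable_scaleR L1_imp_strongly_measurable L1_integrable_norm)

lemma L1_diff: "f \<in> L1 M \<Longrightarrow> g \<in> L1 M \<Longrightarrow> (\<lambda>\<omega>. f \<omega> - g \<omega>) \<in> L1 M"
  using L1_add[OF _ L1_scaleR[of g "-1"], of f] by simp

lemma L1_zero_outside:
  assumes "f \<in> L1 M" "S \<in> sets M"
  shows "zero_outside S f \<in> L1 M"
proof (rule L1I_bound[where g="\<lambda>\<omega>. norm (f \<omega>)"])
  show "strongly_measurable M (zero_outside S f)"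
    unfolding zero_outside_def using assms by (intro strongly_measurable_scaleR L1_imp_strongly_measurable) auto
  show "AE \<omega> in M. norm (zero_outside S f \<omega>) \<le> norm (f \<omega>)"
    by (intro AE_I2) (simp add: zero_outside_def indicator_def)
qed (rule L1_integrable_norm[OF assms(1)])

lemma L1_AE_cong: "f \<in> L1 M \<Longrightarrow> L1eq M g f \<Longrightarrow> g \<in> L1 M"
  unfolding L1eq_def
  by (rule L1I_bound[where g="\<lambda>\<omega>. norm (f \<omega>)"])
    (auto intro!: L1_integrable_norm elim!: strongly_measurable_AE_cong[OF L1_imp_strongly_measurable]
      eventually_mono)

lemma L1_zero: "(\<lambda>\<omega>. 0) \<in> L1 M"
  by (rule L1I_bound[where g="\<lambda>\<omega>. 0"]) (auto intro: strongly_measurable_simple)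

lemma L1norm_triangle:
  assumes "f \<in> L1 M" "g \<in> L1 M"
  shows "L1norm M (\<lambda>\<omega>. f \<omega> + g \<omega>) \<le> L1norm M f + L1norm M g"
proof -
  have "(\<integral>\<omega>. norm (f \<omega> + g \<omega>) \<partial>M) \<le> (\<integral>\<omega>. norm (f \<omega>) + norm (g \<omega>) \<partial>M)"
    using assms by (intro integral_mono L1_integrable_norm L1_add Bochner_Integration.integrable_add)
      (auto intro: norm_triangle_ineq)
  also have "\<dots> = (\<integral>\<omega>. norm (f \<omega>) \<partial>M) + (\<integral>\<omega>. norm (g \<omega>) \<partial>M)"
    using assms by (intro Bochner_Integration.integral_add L1_integrable_norm)
  finally show ?thesis using assms by (simp only: L1norm_eq_integral L1_add)
qed

lemma L1norm_scaleR: "f \<in> L1 M \<Longrightarrow> L1norm M (\<lambda>\<omega>. c *\<^sub>R f \<omega>) = \<bar>c\<bar> * L1norm M f"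
  by (simp add: L1norm_eq_integral L1_scaleR)

lemma L1norm_AE_cong:
  assumes f: "f \<in> L1 M" and eq: "L1eq M g f"
  shows "L1norm M g = L1norm M f"
proof -
  have g: "g \<in> L1 M" by (rule L1_AE_cong[OF f eq])
  have "(\<integral>\<omega>. norm (g \<omega>) \<partial>M) = (\<integral>\<omega>. norm (f \<omega>) \<partial>M)"
  proof (rule integral_cong_AE)
    show "(\<lambda>\<omega>. norm (g \<omega>)) \<in> borel_measurable M"
      using L1_imp_borel[OF g] by (rule measurable_compose[OF _ borel_measurable_norm])
    show "(\<lambda>\<omega>. norm (f \<omega>)) \<in> borel_measurable M"
      using L1_imp_borel[OF f] by (rule measurable_compose[OF _ borel_measurable_norm])
    show "AE \<omega> in M. norm (g \<omega>) = norm (f \<omega>)"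
      using eq unfolding L1eq_def by eventually_elim simp
  qed
  then show ?thesis using L1norm_eq_integral[OF f] L1norm_eq_integral[OF g] by simp
qed

lemma L1norm_eq_0_imp_AE: "f \<in> L1 M \<Longrightarrow> L1norm M f = 0 \<Longrightarrow> AE \<omega> in M. f \<omega> = 0"
  by (simp add: L1norm_eq_integral integral_nonneg_eq_0_iff_AE L1_integrable_norm)

lemma L1norm_zero_outside_Un:
  assumes "f \<in> L1 M" "A \<in> sets M" "B \<in> sets M" "A \<inter> B = {}"
  shows "L1norm M (zero_outside (A \<union> B) f) = L1norm M (zero_outside A f) + L1norm M (zero_outside B f)"
proof -
  have "norm (zero_outside (A \<union> B) f \<omega>) = norm (zero_outside A f \<omega>) + norm (zero_outside B f \<omega>)" for \<omega>
    using assms(4) by (auto simp: zero_outside_def indicator_def)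
  then show ?thesis
    using assms by (simp add: L1norm_eq_integral L1_zero_outside L1_integrable_norm)
qed

lemma L1norm_zero_outside_space: "f \<in> L1 M \<Longrightarrow> L1norm M (zero_outside (space M) f) = L1norm M f"
  by (rule L1norm_AE_cong) (auto simp: L1eq_def zero_outside_def)

lemma L1norm_split:
  assumes "f \<in> L1 M" "S \<in> sets M"
  shows "L1norm M f = L1norm M (zero_outside S f) + L1norm M (zero_outside (space M - S) f)"
  using L1norm_zero_outside_Un[OF assms(1,2), of "space M - S"] assms sets.sets_into_space[OF assms(2)]
  by (simp add: Un_absorb1 L1norm_zero_outside_space)

lemma L1norm_zero_outside_le: "f \<in> L1 M \<Longrightarrow> S \<in> sets M \<Longrightarrow> L1norm M (zero_outside S f) \<le> L1norm M f"
  using L1norm_split[of f S] L1norm_nonneg[of M "zero_outside (space M - S) f"] by linarith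

lemma L1_sum:
  fixes m :: nat
  assumes "\<And>k. k < m \<Longrightarrow> f k \<in> L1 M"
  shows "(\<lambda>\<omega>. \<Sum>k<m. c k *\<^sub>R f k \<omega>) \<in> L1 M \<and>
    L1norm M (\<lambda>\<omega>. \<Sum>k<m. c k *\<^sub>R f k \<omega>) \<le> (\<Sum>k<m. \<bar>c k\<bar> * L1norm M (f k))"
  using assms
proof (induction m)
  case 0
  then show ?case using L1_zero by (simp add: L1norm_AE_zero)
next
  case (Suc m)
  then have IH: "(\<lambda>\<omega>. \<Sum>k<m. c k *\<^sub>R f k \<omega>) \<in> L1 M"
    "L1norm M (\<lambda>\<omega>. \<Sum>k<m. c k *\<^sub>R f k \<omega>) \<le> (\<Sum>k<m. \<bar>c k\<bar> * L1norm M (f k))" by auto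
  have fm: "f m \<in> L1 M" using Suc.prems by auto
  have "L1norm M (\<lambda>\<omega>. (\<Sum>k<m. c k *\<^sub>R f k \<omega>) + c m *\<^sub>R f m \<omega>)
      \<le> L1norm M (\<lambda>\<omega>. \<Sum>k<m. c k *\<^sub>R f k \<omega>) + L1norm M (\<lambda>\<omega>. c m *\<^sub>R f m \<omega>)"
    by (rule L1norm_triangle[OF IH(1) L1_scaleR[OF fm]])
  then show ?case using IH L1_add[OF IH(1) L1_scaleR[OF fm]] L1norm_scaleR[OF fm] by simp
qed

lemma L1sphere_L1normalize:
  assumes "f \<in> L1 M" "L1norm M f \<noteq> 0"
  shows "L1normalize M f \<in> L1sphere M"
  using L1_scaleR[OF assms(1)] L1norm_scaleR[OF assms(1), of "1 / L1norm M f"] assms(2) L1norm_nonneg[of M f]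
  unfolding L1sphere_def L1normalize_def by simp

lemma L1sphere_convex_combination:
  assumes "0 < s" "0 < t" "s + t = 1" "y \<in> L1ball M" "z \<in> L1ball M"
    and "L1eq M x (\<lambda>\<omega>. s *\<^sub>R y \<omega> + t *\<^sub>R z \<omega>)" "L1norm M x = 1"
  shows "y \<in> L1sphere M" "z \<in> L1sphere M"
proof -
  have y: "y \<in> L1 M" "L1norm M y \<le> 1" and z: "z \<in> L1 M" "L1norm M z \<le> 1"
    using assms(4,5) by (auto intro: L1ball_imp_L1 L1ball_imp_L1norm_le)
  have "1 = L1norm M (\<lambda>\<omega>. s *\<^sub>R y \<omega> + t *\<^sub>R z \<omega>)"
    using L1norm_AE_cong[OF L1_add[OF L1_scaleR[OF y(1)] L1_scaleR[OF z(1)]] assms(6)] assms(7) by simp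
  also have "\<dots> \<le> s * L1norm M y + t * L1norm M z"
    using L1norm_triangle[OF L1_scaleR[OF y(1), of s] L1_scaleR[OF z(1), of t]] assms(1,2)
    by (simp add: L1norm_scaleR y z)
  finally have "1 \<le> s * L1norm M y + t * L1norm M z" .
  moreover have "s * L1norm M y \<le> s" "t * L1norm M z \<le> t"
    using y(2) z(2) assms(1,2) by (simp_all add: mult_left_le)
  ultimately have "s * L1norm M y = s * 1" "t * L1norm M z = t * 1" using assms(3) by linarith+
  then show "y \<in> L1sphere M" "z \<in> L1sphere M"
    using assms(1,2) y z unfolding L1sphere_def by auto
qed

end

lemma L1dual_add: "\<phi> \<in> L1dual M \<Longrightarrow> f \<in> L1 M \<Longrightarrow> g \<in> L1 M \<Longrightarrow> \<phi> (\<lambda>\<omega>. f \<omega> + g \<omega>) = \<phi> f + \<phi> g"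
  unfolding L1dual_def by blast

lemma L1dual_scaleR: "\<phi> \<in> L1dual M \<Longrightarrow> f \<in> L1 M \<Longrightarrow> \<phi> (\<lambda>\<omega>. c *\<^sub>R f \<omega>) = c * \<phi> f"
  unfolding L1dual_def by blast

lemma L1dual_bound: "\<phi> \<in> L1dual M \<Longrightarrow> \<exists>C\<ge>0. \<forall>f\<in>L1 M. \<bar>\<phi> f\<bar> \<le> C * L1norm M f"
proof -
  assume "\<phi> \<in> L1dual M"
  then obtain C where C: "\<forall>f\<in>L1 M. \<bar>\<phi> f\<bar> \<le> C * L1norm M f" unfolding L1dual_def by blast
  have "\<bar>\<phi> f\<bar> \<le> max C 0 * L1norm M f" if "f \<in> L1 M" for f
    using C that mult_right_mono[of C "max C 0" "L1norm M f"] L1norm_nonneg[of M f] by fastforce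
  then show ?thesis by (intro exI[of _ "max C 0"]) auto
qed

lemma L1dual_finite_bound:
  fixes F :: "(('a \<Rightarrow> 'b::real_normed_vector) \<Rightarrow> real) set"
  assumes "finite F" "F \<subseteq> L1dual M"
  shows "\<exists>C\<ge>0. \<forall>\<phi>\<in>F. \<forall>f\<in>L1 M. \<bar>\<phi> f\<bar> \<le> C * L1norm M f"
  using assms
proof (induction F rule: finite_induct)
  case empty
  then show ?case by auto
next
  case (insert \<psi> F)
  then obtain C where C: "C \<ge> 0" "\<forall>\<phi>\<in>F. \<forall>f\<in>L1 M. \<bar>\<phi> f\<bar> \<le> C * L1norm M f" by auto
  obtain D where D: "D \<ge> 0" "\<forall>f\<in>L1 M. \<bar>\<psi> f\<bar> \<le> D * L1norm M f"
    using L1dual_bound insert.prems by blast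
  have "\<bar>\<phi> f\<bar> \<le> max C D * L1norm M f" if "\<phi> \<in> insert \<psi> F" "f \<in> L1 M" for \<phi> f
  proof -
    have "C * L1norm M f \<le> max C D * L1norm M f" "D * L1norm M f \<le> max C D * L1norm M f"
      by (auto intro!: mult_right_mono L1norm_nonneg)
    then show ?thesis using that C(2) D(2) by (metis dual_order.trans insert_iff)
  qed
  then have "\<forall>\<phi>\<in>insert \<psi> F. \<forall>f\<in>L1 M. \<bar>\<phi> f\<bar> \<le> max C D * L1norm M f" by blast
  then show ?case using C by (intro exI[of _ "max C D"]) auto
qed

definition weak_basic_nhd ::
    "'a measure \<Rightarrow> (('a \<Rightarrow> 'b::real_normed_vector) \<Rightarrow> real) set \<Rightarrow> real \<Rightarrow> ('a \<Rightarrow> 'b) \<Rightarrow> ('a \<Rightarrow> 'b) set" where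
  "weak_basic_nhd M F e x = {g \<in> L1ball M. \<forall>\<phi>\<in>F. \<bar>\<phi> g - \<phi> x\<bar> < e}"

definition weak_nhds :: "'a measure \<Rightarrow> ('a \<Rightarrow> 'b::real_normed_vector) \<Rightarrow> ('a \<Rightarrow> 'b) filter" where
  "weak_nhds M x = (INF p \<in> {p. finite (fst p) \<and> fst p \<subseteq> L1dual M \<and> snd p > (0::real)}.
     principal (weak_basic_nhd M (fst p) (snd p) x))"

lemma weak_basic_nhd_self: "x \<in> L1ball M \<Longrightarrow> e > 0 \<Longrightarrow> x \<in> weak_basic_nhd M F e x"
  unfolding weak_basic_nhd_def by auto

lemma rel_weak_open_weak_basic_nhd:
  assumes F: "finite F" "F \<subseteq> L1dual M" and e: "e > 0"
  shows "rel_weak_open M (weak_basic_nhd M F e x)"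
  unfolding rel_weak_open_def
proof (intro conjI ballI)
  show "weak_basic_nhd M F e x \<subseteq> L1ball M" unfolding weak_basic_nhd_def by blast
next
  fix g
  assume g: "g \<in> weak_basic_nhd M F e x"
  define d where "d = Max (insert 0 ((\<lambda>\<phi>. \<bar>\<phi> g - \<phi> x\<bar>) ` F))"
  have d: "\<bar>\<phi> g - \<phi> x\<bar> \<le> d" if "\<phi> \<in> F" for \<phi>
    unfolding d_def using that F by (intro Max_ge) auto
  have "d \<in> insert 0 ((\<lambda>\<phi>. \<bar>\<phi> g - \<phi> x\<bar>) ` F)" unfolding d_def using F by (intro Max_in) auto
  then have "d < e" using g e unfolding weak_basic_nhd_def by auto
  moreover have "{h \<in> L1ball M. \<forall>\<phi>\<in>F. \<bar>\<phi> h - \<phi> g\<bar> < e - d} \<subseteq> weak_basic_nhd M F e x"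
  proof
    fix h
    assume h: "h \<in> {h \<in> L1ball M. \<forall>\<phi>\<in>F. \<bar>\<phi> h - \<phi> g\<bar> < e - d}"
    then have "\<bar>\<phi> h - \<phi> x\<bar> < e" if "\<phi> \<in> F" for \<phi>
      using that d[OF that] by auto
    then show "h \<in> weak_basic_nhd M F e x" unfolding weak_basic_nhd_def using h by blast
  qed
  ultimately show "\<exists>F' e'. finite F' \<and> F' \<subseteq> L1dual M \<and> e' > 0 \<and>
      {h \<in> L1ball M. \<forall>\<phi>\<in>F'. \<bar>\<phi> h - \<phi> g\<bar> < e'} \<subseteq> weak_basic_nhd M F e x"
    using F by (intro exI[of _ F] exI[of _ "e - d"]) auto
qed

lemma rel_weak_open_imp_nhd: "rel_weak_open M U \<Longrightarrow> x \<in> U \<Longrightarrow> rel_weak_nhd M U x"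
  unfolding rel_weak_nhd_def rel_weak_open_def by blast

lemma eventually_weak_nhds:
  fixes x :: "'a \<Rightarrow> 'b::real_normed_vector"
  shows "eventually P (weak_nhds M x) \<longleftrightarrow>
    (\<exists>F e. finite F \<and> F \<subseteq> L1dual M \<and> e > 0 \<and> (\<forall>g\<in>weak_basic_nhd M F e x. P g))"
proof -
  define I where "I = {p. finite (fst p) \<and> fst p \<subseteq> (L1dual M :: (('a \<Rightarrow> 'b) \<Rightarrow> real) set) \<and> snd p > (0::real)}"
  have "eventually P (weak_nhds M x) \<longleftrightarrow>
      (\<exists>p\<in>I. eventually P (principal (weak_basic_nhd M (fst p) (snd p) x)))"
    unfolding weak_nhds_def I_def[symmetric]
  proof (rule eventually_INF_base)
    have "({}, 1) \<in> I" unfolding I_def by simp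
    then show "I \<noteq> {}" by blast
  next
    fix p q
    assume "p \<in> I" "q \<in> I"
    then show "\<exists>r\<in>I. principal (weak_basic_nhd M (fst r) (snd r) x)
        \<le> inf (principal (weak_basic_nhd M (fst p) (snd p) x)) (principal (weak_basic_nhd M (fst q) (snd q) x))"
      unfolding I_def
      by (intro bexI[of _ "(fst p \<union> fst q, min (snd p) (snd q))"]) (auto simp: weak_basic_nhd_def)
  qed
  then show ?thesis by (auto simp: eventually_principal I_def)
qed

lemma eventually_weak_nhds_L1ball: "\<forall>\<^sub>F g in weak_nhds M x. g \<in> L1ball M"
  unfolding eventually_weak_nhds by (intro exI[of _ "{}"] exI[of _ 1]) (auto simp: weak_basic_nhd_def)

lemma tendsto_L1dual_weak_nhds: "\<phi> \<in> L1dual M \<Longrightarrow> ((\<lambda>g. \<phi> g) \<longlongrightarrow> \<phi> x) (weak_nhds M x)"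
proof (rule tendstoI)
  fix \<epsilon> :: real
  assume "\<phi> \<in> L1dual M" "\<epsilon> > 0"
  then show "\<forall>\<^sub>F g in weak_nhds M x. dist (\<phi> g) (\<phi> x) < \<epsilon>"
    unfolding eventually_weak_nhds
    by (intro exI[of _ "{\<phi>}"] exI[of _ \<epsilon>]) (auto simp: weak_basic_nhd_def dist_real_def)
qed

lemma eventually_weak_nhds_imp_rel_weak_open:
  assumes "x \<in> L1ball M" "eventually P (weak_nhds M x)"
  shows "\<exists>G. rel_weak_open M G \<and> x \<in> G \<and> G \<subseteq> {g. P g}"
proof -
  obtain F e where "finite F" "F \<subseteq> L1dual M" "e > 0" "\<forall>g\<in>weak_basic_nhd M F e x. P g"
    using assms(2) unfolding eventually_weak_nhds by blast
  then show ?thesis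
    using rel_weak_open_weak_basic_nhd weak_basic_nhd_self[OF assms(1)] by blast
qed

lemma eventually_in_rel_weak_nhd:
  assumes W: "rel_weak_nhd M W z" and ball: "\<forall>\<^sub>F w in net. g w \<in> L1ball M"
    and lim: "\<And>\<phi>. \<phi> \<in> L1dual M \<Longrightarrow> ((\<lambda>w. \<phi> (g w)) \<longlongrightarrow> \<phi> z) net"
  shows "\<forall>\<^sub>F w in net. g w \<in> W"
proof -
  obtain G where G: "rel_weak_open M G" "z \<in> G" "G \<subseteq> W"
    using W unfolding rel_weak_nhd_def by blast
  obtain F e where F: "finite F" "F \<subseteq> L1dual M" "e > 0" "{h \<in> L1ball M. \<forall>\<phi>\<in>F. \<bar>\<phi> h - \<phi> z\<bar> < e} \<subseteq> G"
    using G(1,2) unfolding rel_weak_open_def by blast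
  have "\<forall>\<phi>\<in>F. \<forall>\<^sub>F w in net. \<bar>\<phi> (g w) - \<phi> z\<bar> < e"
  proof
    fix \<phi>
    assume "\<phi> \<in> F"
    with F(2) have "\<phi> \<in> L1dual M" by blast
    from tendstoD[OF lim[OF this] F(3)]
    show "\<forall>\<^sub>F w in net. \<bar>\<phi> (g w) - \<phi> z\<bar> < e" by (simp add: dist_real_def)
  qed
  then have "\<forall>\<^sub>F w in net. \<forall>\<phi>\<in>F. \<bar>\<phi> (g w) - \<phi> z\<bar> < e"
    by (rule eventually_ball_finite[OF F(1)])
  with ball show ?thesis
    by eventually_elim (use F(4) G(3) in auto)
qed

context
  fixes M :: "'a measure"
  assumes complete: "complete_measure M"
begin

lemma L1dual_diff:
  assumes "\<phi> \<in> L1dual M" "f \<in> L1 M" "g \<in> L1 M"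
  shows "\<phi> (\<lambda>\<omega>. f \<omega> - g \<omega>) = \<phi> f - \<phi> g"
  using L1dual_add[OF assms(1) L1_diff[OF complete assms(2,3)] assms(3)] by simp

lemma L1dual_AE_cong:
  assumes "\<phi> \<in> L1dual M" "f \<in> L1 M" "g \<in> L1 M" "L1eq M f g"
  shows "\<phi> f = \<phi> g"
proof -
  obtain C where "\<forall>f\<in>L1 M. \<bar>\<phi> f\<bar> \<le> C * L1norm M f" using L1dual_bound[OF assms(1)] by blast
  moreover have "L1norm M (\<lambda>\<omega>. f \<omega> - g \<omega>) = 0"
    using assms(4) unfolding L1eq_def by (intro L1norm_AE_zero) (auto elim: eventually_mono)
  ultimately have "\<phi> (\<lambda>\<omega>. f \<omega> - g \<omega>) = 0" using L1_diff[OF complete assms(2,3)] by fastforce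
  then show ?thesis using L1dual_diff[OF assms(1-3)] by simp
qed

lemma L1dual_AE_zero:
  assumes "\<phi> \<in> L1dual M" "f \<in> L1 M" "AE \<omega> in M. f \<omega> = 0"
  shows "\<phi> f = 0"
proof -
  have "\<phi> f = \<phi> (\<lambda>\<omega>. 0 *\<^sub>R f \<omega>)"
    using assms by (intro L1dual_AE_cong L1_scaleR[OF complete]) (auto simp: L1eq_def)
  then show ?thesis using L1dual_scaleR[OF assms(1,2), of 0] by simp
qed

lemma L1dual_L1normalize: "\<phi> \<in> L1dual M \<Longrightarrow> f \<in> L1 M \<Longrightarrow> \<phi> (L1normalize M f) = \<phi> f / L1norm M f"
  unfolding L1normalize_def using L1dual_scaleR[of \<phi> M f "1 / L1norm M f"] by simp

lemma L1dual_zero_outside: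
  assumes "\<phi> \<in> L1dual M" "S \<in> sets M"
  shows "(\<lambda>g. \<phi> (zero_outside S g)) \<in> L1dual M"
proof -
  obtain C where C: "C \<ge> 0" "\<forall>f\<in>L1 M. \<bar>\<phi> f\<bar> \<le> C * L1norm M f" using L1dual_bound[OF assms(1)] by blast
  have "\<bar>\<phi> (zero_outside S f)\<bar> \<le> C * L1norm M f" if "f \<in> L1 M" for f
  proof -
    have "\<bar>\<phi> (zero_outside S f)\<bar> \<le> C * L1norm M (zero_outside S f)"
      using C(2) L1_zero_outside[OF complete that assms(2)] by blast
    also have "\<dots> \<le> C * L1norm M f"
      using L1norm_zero_outside_le[OF complete that assms(2)] C(1) by (rule mult_left_mono)
    finally show ?thesis .
  qed
  then show ?thesis unfolding L1dual_def
    using L1dual_add[OF assms(1) L1_zero_outside[OF complete _ assms(2)] L1_zero_outside[OF complete _ assms(2)]]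
      L1dual_scaleR[OF assms(1) L1_zero_outside[OF complete _ assms(2)]]
    by (auto simp: zero_outside_add zero_outside_scaleR)
qed

lemma rel_weak_open_saturated: "rel_weak_open M U \<Longrightarrow> L1saturated M U"
  unfolding L1saturated_def
proof (intro ballI impI)
  fix f g
  assume U: "rel_weak_open M U" and f: "f \<in> U" and g: "g \<in> L1 M" and eq: "L1eq M g f"
  obtain F e where F: "F \<subseteq> L1dual M" "e > 0" "{h \<in> L1ball M. \<forall>\<phi>\<in>F. \<bar>\<phi> h - \<phi> f\<bar> < e} \<subseteq> U"
    using U f unfolding rel_weak_open_def by blast
  have f_ball: "f \<in> L1ball M" using U f unfolding rel_weak_open_def by blast
  then have "g \<in> L1ball M" using g L1norm_AE_cong[OF complete _ eq] unfolding L1ball_def by auto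
  moreover have "\<forall>\<phi>\<in>F. \<bar>\<phi> g - \<phi> f\<bar> < e"
    using L1dual_AE_cong[of _ g f] F(1,2) g L1ball_imp_L1[OF f_ball] eq by (metis abs_zero diff_self subsetD)
  ultimately show "g \<in> U" using F(3) by blast
qed

end

section \<open>Weak continuity of restricted norms at the unit sphere\<close>

definition norming_integral ::
    "'a measure \<Rightarrow> 'a set \<Rightarrow> ('a \<Rightarrow> 'b::real_normed_vector) \<Rightarrow> ('a \<Rightarrow> 'b) \<Rightarrow> real" where
  "norming_integral M S s g = (\<integral>\<omega>. indicator S \<omega> * norming_functional (s \<omega>) (g \<omega>) \<partial>M)"

context
  fixes M :: "'a measure"
  assumes complete: "complete_measure M"
begin

lemma strongly_measurable_dominated_approx:
  fixes f :: "'a \<Rightarrow> 'b::real_normed_vector"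
  assumes f: "strongly_measurable M f"
  obtains s where "\<And>n. simple_function M (s n)" "\<And>n \<omega>. norm (s n \<omega>) \<le> 2 * norm (f \<omega>)"
    "AE \<omega> in M. (\<lambda>n. s n \<omega>) \<longlonglongrightarrow> f \<omega>"
proof -
  obtain t where t: "\<And>n. simple_function M (t n)" "AE \<omega> in M. (\<lambda>n. t n \<omega>) \<longlonglongrightarrow> f \<omega>"
    using f unfolding strongly_measurable_def by blast
  have [measurable]: "f \<in> borel_measurable M" "t n \<in> borel_measurable M" for n
    using borel_measurable_strongly_measurable[OF complete f] borel_measurable_simple_function[OF t(1)] by auto
  define s where "s n \<omega> = (if norm (t n \<omega>) \<le> 2 * norm (f \<omega>) then t n \<omega> else 0)" for n \<omega>
  have "simple_function M (s n)" for n
    unfolding s_def by (rule simple_function_If[OF t(1)]) auto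
  moreover have "norm (s n \<omega>) \<le> 2 * norm (f \<omega>)" for n \<omega> unfolding s_def by auto
  moreover have "AE \<omega> in M. (\<lambda>n. s n \<omega>) \<longlonglongrightarrow> f \<omega>"
    using t(2)
  proof eventually_elim
    case (elim \<omega>)
    show ?case
    proof (cases "f \<omega> = 0")
      case True
      then have "s n \<omega> = 0" for n by (auto simp: s_def)
      then show ?thesis using True by simp
    next
      case False
      then have "norm (f \<omega>) < 2 * norm (f \<omega>)" by simp
      from order_tendstoD(2)[OF tendsto_norm[OF elim] this]
      have "\<forall>\<^sub>F n in sequentially. t n \<omega> = s n \<omega>" by eventually_elim (auto simp: s_def)
      with elim show ?thesis by (rule Lim_transform_eventually)
    qed
  qed
  ultimately show ?thesis using that by blast
qed

lemma simple_function_L1_approx: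
  fixes f :: "'a \<Rightarrow> 'b::real_normed_vector"
  assumes f: "f \<in> L1 M" and \<delta>: "\<delta> > 0"
  shows "\<exists>s. simple_function M s \<and> s \<in> L1 M \<and> L1norm M (\<lambda>\<omega>. f \<omega> - s \<omega>) < \<delta>"
proof -
  obtain s where s: "\<And>n. simple_function M (s n)" and s_le: "\<And>n \<omega>. norm (s n \<omega>) \<le> 2 * norm (f \<omega>)"
    and s_lim: "AE \<omega> in M. (\<lambda>n. s n \<omega>) \<longlonglongrightarrow> f \<omega>"
    using strongly_measurable_dominated_approx[OF L1_imp_strongly_measurable[OF complete f]] by blast
  have [measurable]: "f \<in> borel_measurable M" by (rule L1_imp_borel[OF complete f])
  have "(\<lambda>n. \<integral>\<^sup>+ \<omega>. ennreal (norm (s n \<omega> - f \<omega>)) \<partial>M) \<longlonglongrightarrow> (\<integral>\<^sup>+ \<omega>. 0 \<partial>M)"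
  proof (rule nn_integral_dominated_convergence[where w="\<lambda>\<omega>. ennreal (3 * norm (f \<omega>))"])
    show "(\<lambda>\<omega>. ennreal (norm (s n \<omega> - f \<omega>))) \<in> borel_measurable M" for n
    proof -
      have "strongly_measurable M (\<lambda>\<omega>. s n \<omega> - f \<omega>)"
        by (rule strongly_measurable_diff[OF strongly_measurable_simple[OF s] L1_imp_strongly_measurable[OF complete f]])
      from borel_measurable_strongly_measurable[OF complete this] show ?thesis by measurable
    qed
    show "AE \<omega> in M. ennreal (norm (s n \<omega> - f \<omega>)) \<le> ennreal (3 * norm (f \<omega>))" for n
    proof (intro AE_I2 ennreal_leI)
      fix \<omega>
      show "norm (s n \<omega> - f \<omega>) \<le> 3 * norm (f \<omega>)"
        using s_le[of n \<omega>] norm_triangle_ineq4[of "s n \<omega>" "f \<omega>"] by linarith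
    qed
    have "(\<integral>\<^sup>+ \<omega>. ennreal (3 * norm (f \<omega>)) \<partial>M) = 3 * (\<integral>\<^sup>+ \<omega>. ennreal (norm (f \<omega>)) \<partial>M)"
      by (simp add: ennreal_mult nn_integral_cmult)
    then show "(\<integral>\<^sup>+ \<omega>. ennreal (3 * norm (f \<omega>)) \<partial>M) < \<infinity>"
      using f unfolding L1_def by (simp add: ennreal_mult_less_top)
    show "AE \<omega> in M. (\<lambda>n. ennreal (norm (s n \<omega> - f \<omega>))) \<longlonglongrightarrow> 0"
      using s_lim
    proof eventually_elim
      case (elim \<omega>)
      then have "(\<lambda>n. norm (s n \<omega> - f \<omega>)) \<longlonglongrightarrow> norm (f \<omega> - f \<omega>)" by (intro tendsto_intros)
      then show ?case using tendsto_ennrealI by fastforce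
    qed
  qed auto
  from order_tendstoD(2)[OF this[simplified], of "ennreal \<delta>"] \<delta>
  obtain n where n: "(\<integral>\<^sup>+ \<omega>. ennreal (norm (s n \<omega> - f \<omega>)) \<partial>M) < ennreal \<delta>"
    by (auto simp: eventually_sequentially)
  have "L1norm M (\<lambda>\<omega>. f \<omega> - s n \<omega>) = enn2real (\<integral>\<^sup>+ \<omega>. ennreal (norm (s n \<omega> - f \<omega>)) \<partial>M)"
    unfolding L1norm_def by (simp add: norm_minus_commute)
  also have "\<dots> < \<delta>"
    using n \<delta> by (metis enn2real_ennreal ennreal_less_top enn2real_less_iff less_le order.strict_trans)
  finally have "L1norm M (\<lambda>\<omega>. f \<omega> - s n \<omega>) < \<delta>" .
  moreover have "s n \<in> L1 M"
    using L1_integrable_norm[OF complete f] s_le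
    by (intro L1I_bound[OF complete strongly_measurable_simple[OF s], of "\<lambda>\<omega>. 2 * norm (f \<omega>)"]) auto
  ultimately show ?thesis using s by blast
qed

lemma integrable_norming_integral:
  assumes s: "simple_function M s" and S: "S \<in> sets M" and g: "g \<in> L1 M"
  shows "integrable M (\<lambda>\<omega>. indicator S \<omega> * norming_functional (s \<omega>) (g \<omega>))"
proof (rule Bochner_Integration.integrable_bound[OF L1_integrable_norm[OF complete g]])
  show "(\<lambda>\<omega>. indicator S \<omega> * norming_functional (s \<omega>) (g \<omega>)) \<in> borel_measurable M"
    using borel_measurable_norming_functional_simple[OF s L1_imp_borel[OF complete g]] S
    by (intro borel_measurable_times) auto
  show "AE \<omega> in M. norm (indicator S \<omega> * norming_functional (s \<omega>) (g \<omega>)) \<le> norm (norm (g \<omega>))"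
  proof (intro AE_I2)
    fix \<omega>
    show "norm (indicator S \<omega> * norming_functional (s \<omega>) (g \<omega>)) \<le> norm (norm (g \<omega>))"
      using norming_functional(2)[of "s \<omega>" "g \<omega>"] by (simp add: indicator_def)
  qed
qed

lemma L1dual_norming_integral:
  assumes s: "simple_function M s" and S: "S \<in> sets M"
  shows "norming_integral M S s \<in> L1dual M"
  unfolding L1dual_def
proof (intro CollectI conjI ballI allI exI[of _ 1])
  fix f g :: "'a \<Rightarrow> 'b"
  assume "f \<in> L1 M" "g \<in> L1 M"
  then show "norming_integral M S s (\<lambda>\<omega>. f \<omega> + g \<omega>) = norming_integral M S s f + norming_integral M S s g"
    unfolding norming_integral_def linear_add[OF norming_functional(1)] distrib_left
    using integrable_norming_integral[OF s S] by simp
next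
  fix f :: "'a \<Rightarrow> 'b" and c :: real
  show "norming_integral M S s (\<lambda>\<omega>. c *\<^sub>R f \<omega>) = c * norming_integral M S s f"
    unfolding norming_integral_def linear_scale[OF norming_functional(1)] by (simp add: ac_simps)
next
  fix g :: "'a \<Rightarrow> 'b"
  assume g: "g \<in> L1 M"
  have "\<bar>norming_integral M S s g\<bar> \<le> (\<integral>\<omega>. \<bar>indicator S \<omega> * norming_functional (s \<omega>) (g \<omega>)\<bar> \<partial>M)"
    unfolding norming_integral_def by (rule integral_abs_bound)
  also have "\<dots> \<le> (\<integral>\<omega>. norm (g \<omega>) \<partial>M)"
    using integrable_norming_integral[OF s S g] L1_integrable_norm[OF complete g] norming_functional(2)
    by (intro integral_mono) (auto simp: indicator_def)
  finally show "\<bar>norming_integral M S s g\<bar> \<le> 1 * L1norm M g" using L1norm_eq_integral[OF complete g] by simp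
qed

lemma norming_integral_le:
  assumes s: "simple_function M s" and S: "S \<in> sets M" and g: "g \<in> L1 M"
  shows "norming_integral M S s g \<le> L1norm M (zero_outside S g)"
proof -
  have "norming_integral M S s g \<le> (\<integral>\<omega>. norm (zero_outside S g \<omega>) \<partial>M)"
    unfolding norming_integral_def
    using integrable_norming_integral[OF s S g] L1_integrable_norm[OF complete L1_zero_outside[OF complete g S]]
      norming_functional(2)[of "s _" "g _"]
    by (intro integral_mono) (auto simp: zero_outside_def indicator_def abs_le_iff)
  then show ?thesis using L1norm_eq_integral[OF complete L1_zero_outside[OF complete g S]] by simp
qed

lemma norming_integral_ge:
  assumes s: "simple_function M s" "s \<in> L1 M" and S: "S \<in> sets M" and x: "x \<in> L1 M"
  shows "L1norm M (zero_outside S x) - 2 * L1norm M (\<lambda>\<omega>. zero_outside S x \<omega> - s \<omega>) \<le> norming_integral M S s x"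
proof -
  define f where "f = zero_outside S x"
  have f: "f \<in> L1 M" and fs: "(\<lambda>\<omega>. f \<omega> - s \<omega>) \<in> L1 M"
    unfolding f_def using L1_zero_outside[OF complete x S] L1_diff[OF complete _ s(2)] by auto
  have "norm (f \<omega>) - 2 * norm (f \<omega> - s \<omega>) \<le> indicator S \<omega> * norming_functional (s \<omega>) (x \<omega>)" for \<omega>
  proof -
    have "indicator S \<omega> * norming_functional (s \<omega>) (x \<omega>) = norming_functional (s \<omega>) (f \<omega>)"
      unfolding f_def zero_outside_def by (simp add: linear_scale[OF norming_functional(1)])
    also have "\<dots> = norm (s \<omega>) + norming_functional (s \<omega>) (f \<omega> - s \<omega>)"
      using linear_diff[OF norming_functional(1), of "s \<omega>" "f \<omega>" "s \<omega>"] norming_functional(3)[of "s \<omega>"]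
      by simp
    also have "\<dots> \<ge> norm (s \<omega>) - norm (f \<omega> - s \<omega>)"
      using norming_functional(2)[of "s \<omega>" "f \<omega> - s \<omega>"] by linarith
    finally show ?thesis using norm_triangle_ineq2[of "f \<omega>" "s \<omega>"] by linarith
  qed
  moreover have "integrable M (\<lambda>\<omega>. norm (f \<omega>) - 2 * norm (f \<omega> - s \<omega>))"
    using L1_integrable_norm[OF complete f] L1_integrable_norm[OF complete fs] by simp
  ultimately have "(\<integral>\<omega>. norm (f \<omega>) - 2 * norm (f \<omega> - s \<omega>) \<partial>M) \<le> norming_integral M S s x"
    unfolding norming_integral_def by (intro integral_mono integrable_norming_integral[OF s(1) S x])
  moreover have "(\<integral>\<omega>. norm (f \<omega>) - 2 * norm (f \<omega> - s \<omega>) \<partial>M) = L1norm M f - 2 * L1norm M (\<lambda>\<omega>. f \<omega> - s \<omega>)"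
    using L1_integrable_norm[OF complete f] L1_integrable_norm[OF complete fs]
    by (simp add: L1norm_eq_integral[OF complete f] L1norm_eq_integral[OF complete fs])
  ultimately show ?thesis unfolding f_def by simp
qed

lemma L1norm_zero_outside_supporting_functional:
  fixes x :: "'a \<Rightarrow> 'b::real_normed_vector"
  assumes x: "x \<in> L1 M" and S: "S \<in> sets M" and \<delta>: "\<delta> > 0"
  shows "\<exists>\<phi>\<in>L1dual M. (\<forall>g\<in>L1 M. \<phi> g \<le> L1norm M (zero_outside S g)) \<and>
    L1norm M (zero_outside S x) - \<delta> < \<phi> x"
proof -
  obtain s where s: "simple_function M s" "s \<in> L1 M" "L1norm M (\<lambda>\<omega>. zero_outside S x \<omega> - s \<omega>) < \<delta> / 2"
    using simple_function_L1_approx[OF L1_zero_outside[OF complete x S], of "\<delta> / 2"] \<delta> by auto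
  then have "L1norm M (zero_outside S x) - \<delta> < norming_integral M S s x"
    using norming_integral_ge[OF s(1,2) S x] by linarith
  then show ?thesis
    using L1dual_norming_integral[OF s(1) S] norming_integral_le[OF s(1) S] by blast
qed

lemma eventually_L1norm_zero_outside_gt:
  fixes x :: "'a \<Rightarrow> 'b::real_normed_vector"
  assumes x: "x \<in> L1 M" and S: "S \<in> sets M" and \<delta>: "\<delta> > 0"
  shows "\<forall>\<^sub>F g in weak_nhds M x. L1norm M (zero_outside S x) - \<delta> < L1norm M (zero_outside S g)"
proof -
  obtain \<phi> where \<phi>: "\<phi> \<in> L1dual M" "\<forall>g\<in>L1 M. \<phi> g \<le> L1norm M (zero_outside S g)"
    "L1norm M (zero_outside S x) - \<delta>/2 < \<phi> x"
    using L1norm_zero_outside_supporting_functional[OF x S, of "\<delta>/2"] \<delta> by auto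
  have "\<forall>\<^sub>F g in weak_nhds M x. \<phi> x - \<delta>/2 < \<phi> g"
    using order_tendstoD(1)[OF tendsto_L1dual_weak_nhds[OF \<phi>(1)], of "\<phi> x - \<delta>/2"] \<delta> by simp
  with eventually_weak_nhds_L1ball[of M x] show ?thesis
  proof eventually_elim
    fix g
    assume "g \<in> L1ball M" "\<phi> x - \<delta>/2 < \<phi> g"
    then show "L1norm M (zero_outside S x) - \<delta> < L1norm M (zero_outside S g)"
      using \<phi>(2,3) L1ball_imp_L1[of g M] by fastforce
  qed
qed

text \<open>Both restricted norms are weakly lower semicontinuous and, on the unit ball, add up to at
  most one, which is their sum at x.\<close>
lemma tendsto_L1norm_zero_outside:
  fixes x :: "'a \<Rightarrow> 'b::real_normed_vector"
  assumes x: "x \<in> L1sphere M" and S: "S \<in> sets M"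
  shows "((\<lambda>g. L1norm M (zero_outside S g)) \<longlongrightarrow> L1norm M (zero_outside S x)) (weak_nhds M x)"
proof (rule tendstoI)
  fix \<epsilon> :: real
  assume \<epsilon>: "\<epsilon> > 0"
  have xL: "x \<in> L1 M" and "L1norm M x = 1" using x unfolding L1sphere_def by auto
  have S': "space M - S \<in> sets M" using S by auto
  have split: "L1norm M g = L1norm M (zero_outside S g) + L1norm M (zero_outside (space M - S) g)"
    if "g \<in> L1 M" for g
    by (rule L1norm_split[OF complete that S])
  have x_split: "1 = L1norm M (zero_outside S x) + L1norm M (zero_outside (space M - S) x)"
    using split[OF xL] \<open>L1norm M x = 1\<close> by simp
  show "\<forall>\<^sub>F g in weak_nhds M x. dist (L1norm M (zero_outside S g)) (L1norm M (zero_outside S x)) < \<epsilon>"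
    using eventually_weak_nhds_L1ball[of M x] eventually_L1norm_zero_outside_gt[OF xL S \<epsilon>]
      eventually_L1norm_zero_outside_gt[OF xL S' \<epsilon>]
  proof eventually_elim
    fix g
    assume g: "g \<in> L1ball M" "L1norm M (zero_outside S x) - \<epsilon> < L1norm M (zero_outside S g)"
      "L1norm M (zero_outside (space M - S) x) - \<epsilon> < L1norm M (zero_outside (space M - S) g)"
    have "L1norm M g \<le> 1" using g(1) by (rule L1ball_imp_L1norm_le)
    then show "dist (L1norm M (zero_outside S g)) (L1norm M (zero_outside S x)) < \<epsilon>"
      using g(2,3) x_split split[OF L1ball_imp_L1[OF g(1)]] unfolding dist_real_def by linarith
  qed
qed

lemma eventually_L1normalize_zero_outside_in_nhd:
  fixes x :: "'a \<Rightarrow> 'b::real_normed_vector"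
  assumes x: "x \<in> L1sphere M" and S: "S \<in> sets M" and nonzero: "L1norm M (zero_outside S x) \<noteq> 0"
    and W: "rel_weak_nhd M W (L1normalize M (zero_outside S x))"
  shows "\<forall>\<^sub>F w in weak_nhds M x. L1normalize M (zero_outside S w) \<in> W"
proof (rule eventually_in_rel_weak_nhd[OF W])
  have norm_lim: "((\<lambda>w. L1norm M (zero_outside S w)) \<longlongrightarrow> L1norm M (zero_outside S x)) (weak_nhds M x)"
    by (rule tendsto_L1norm_zero_outside[OF x S])
  have "0 < L1norm M (zero_outside S x)" using nonzero L1norm_nonneg[of M] by (simp add: order_less_le)
  from eventually_weak_nhds_L1ball[of M x] order_tendstoD(1)[OF norm_lim this]
  have "\<forall>\<^sub>F w in weak_nhds M x. w \<in> L1ball M \<and> 0 < L1norm M (zero_outside S w)"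
    by (rule eventually_conj)
  then show "\<forall>\<^sub>F w in weak_nhds M x. L1normalize M (zero_outside S w) \<in> L1ball M"
  proof (rule eventually_mono)
    fix w :: "'a \<Rightarrow> 'b"
    assume "w \<in> L1ball M \<and> 0 < L1norm M (zero_outside S w)"
    then show "L1normalize M (zero_outside S w) \<in> L1ball M"
      using L1sphere_L1normalize[OF complete L1_zero_outside[OF complete L1ball_imp_L1 S]]
        L1sphere_subset_L1ball by fastforce
  qed
next
  fix \<phi> :: "('a \<Rightarrow> 'b) \<Rightarrow> real"
  assume \<phi>: "\<phi> \<in> L1dual M"
  have "((\<lambda>w. \<phi> (zero_outside S w) / L1norm M (zero_outside S w)) \<longlongrightarrow>
      \<phi> (zero_outside S x) / L1norm M (zero_outside S x)) (weak_nhds M x)"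
    using nonzero by (intro tendsto_divide tendsto_L1norm_zero_outside[OF x S]
      tendsto_L1dual_weak_nhds[OF L1dual_zero_outside[OF complete \<phi> S]])
  moreover have "\<phi> (zero_outside S x) / L1norm M (zero_outside S x) = \<phi> (L1normalize M (zero_outside S x))"
    using L1dual_L1normalize[OF complete \<phi> L1_zero_outside[OF complete _ S]] x unfolding L1sphere_def by simp
  moreover have "\<forall>\<^sub>F w in weak_nhds M x.
      \<phi> (zero_outside S w) / L1norm M (zero_outside S w) = \<phi> (L1normalize M (zero_outside S w))"
    using eventually_weak_nhds_L1ball[of M x]
    by (rule eventually_mono) (simp add: L1dual_L1normalize[OF complete \<phi> L1_zero_outside[OF complete L1ball_imp_L1 S]])
  ultimately show "((\<lambda>w. \<phi> (L1normalize M (zero_outside S w))) \<longlongrightarrow> \<phi> (L1normalize M (zero_outside S x)))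
      (weak_nhds M x)"
    using Lim_transform_eventually by fastforce
qed

end

lemma mem_L1comb2_iff:
  "w \<in> L1comb M 2 (\<lambda>k. if k = 0 then lam else nu) (\<lambda>k. if k = 0 then U else V) \<longleftrightarrow>
    w \<in> L1 M \<and> (\<exists>a\<in>U. \<exists>b\<in>V. L1eq M w (\<lambda>\<omega>. lam *\<^sub>R a \<omega> + nu *\<^sub>R b \<omega>))"
proof -
  have sum2: "(\<Sum>k<2::nat. f k) = f 0 + f 1" for f :: "nat \<Rightarrow> 'b::real_normed_vector"
    by (simp add: numeral_2_eq_2)
  have all2: "(\<forall>k<2::nat. P k) \<longleftrightarrow> P 0 \<and> P 1" for P
    by (auto simp: numeral_2_eq_2 less_Suc_eq)
  show ?thesis
    unfolding L1comb_def sum2 all2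
    by (auto intro!: exI[of _ "\<lambda>k. if k = 0 then _ else _"])
qed

context
  fixes M :: "'a measure"
  assumes complete: "complete_measure M"
begin

lemma L1ball_rebalance_excess:
  fixes a0 b0 :: "'a \<Rightarrow> 'b::real_normed_vector"
  assumes lam: "0 < lam" "0 < nu" "lam + nu = 1" and a0: "a0 \<in> L1 M" and b0: "b0 \<in> L1 M"
    and total: "lam * L1norm M a0 + nu * L1norm M b0 \<le> 1" and excess: "1 < L1norm M a0"
  obtains a b where "a \<in> L1ball M" "b \<in> L1ball M"
    "\<And>\<omega>. lam *\<^sub>R a \<omega> + nu *\<^sub>R b \<omega> = lam *\<^sub>R a0 \<omega> + nu *\<^sub>R b0 \<omega>"
    "L1norm M (\<lambda>\<omega>. a \<omega> - a0 \<omega>) + L1norm M (\<lambda>\<omega>. b \<omega> - b0 \<omega>) \<le> (L1norm M a0 - 1) / nu"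
proof -
  define m where "m = L1norm M a0"
  define c where "c = lam / nu * (1 - 1 / m)"
  define a where "a = (\<lambda>\<omega>. (1 / m) *\<^sub>R a0 \<omega>)"
  define b where "b = (\<lambda>\<omega>. b0 \<omega> + c *\<^sub>R a0 \<omega>)"
  have m: "1 < m" "L1norm M a0 = m" using excess unfolding m_def by simp_all
  have c: "0 \<le> c" "c * m = lam / nu * (m - 1)"
    using m lam unfolding c_def by (simp_all add: field_simps)
  have ca0: "(\<lambda>\<omega>. c *\<^sub>R a0 \<omega>) \<in> L1 M" by (rule L1_scaleR[OF complete a0])
  have "L1norm M a = 1"
    unfolding a_def using L1norm_scaleR[OF complete a0, of "1 / m"] m by simp
  then have "a \<in> L1ball M" unfolding L1ball_def using L1_scaleR[OF complete a0] by (simp add: a_def)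
  moreover have "L1norm M b \<le> 1"
  proof -
    have "L1norm M b \<le> L1norm M b0 + c * m"
      unfolding b_def using L1norm_triangle[OF complete b0 ca0] L1norm_scaleR[OF complete a0, of c] c(1) m(2)
      by simp
    also have "\<dots> = L1norm M b0 + lam / nu * (m - 1)" using c(2) by simp
    also have "\<dots> \<le> 1"
    proof -
      have "nu * (L1norm M b0 + lam / nu * (m - 1)) = lam * m + nu * L1norm M b0 - lam"
        using lam by (simp add: field_simps)
      also have "\<dots> \<le> nu * 1" using total lam m(2) by simp
      finally show ?thesis using lam(2) by (rule mult_left_le_imp_le)
    qed
    finally show ?thesis .
  qed
  then have "b \<in> L1ball M" unfolding L1ball_def b_def using L1_add[OF complete b0 ca0] by simp
  moreover have "lam *\<^sub>R a \<omega> + nu *\<^sub>R b \<omega> = lam *\<^sub>R a0 \<omega> + nu *\<^sub>R b0 \<omega>" for \<omega>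
  proof -
    have "lam / m + nu * c = lam" unfolding c_def using lam m by (simp add: field_simps)
    then show ?thesis unfolding a_def b_def by (simp add: algebra_simps flip: scaleR_add_left)
  qed
  moreover have "L1norm M (\<lambda>\<omega>. a \<omega> - a0 \<omega>) = m - 1"
  proof -
    have "(\<lambda>\<omega>. a \<omega> - a0 \<omega>) = (\<lambda>\<omega>. (1 / m - 1) *\<^sub>R a0 \<omega>)" unfolding a_def by (simp add: algebra_simps)
    moreover have "\<bar>1 / m - 1\<bar> = 1 - 1 / m" using m(1) by simp
    ultimately have "L1norm M (\<lambda>\<omega>. a \<omega> - a0 \<omega>) = (1 - 1 / m) * m"
      using L1norm_scaleR[OF complete a0, of "1 / m - 1"] m(2) by simp
    also have "\<dots> = m - 1" using m(1) by (simp add: field_simps)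
    finally show ?thesis .
  qed
  moreover have "L1norm M (\<lambda>\<omega>. b \<omega> - b0 \<omega>) = lam / nu * (m - 1)"
    unfolding b_def using L1norm_scaleR[OF complete a0, of c] c m(2) by simp
  moreover have "(m - 1) + lam / nu * (m - 1) = (m - 1) / nu"
    using lam(2) unfolding eq_diff_eq[THEN iffD2, OF lam(3)] by (simp add: field_simps)
  ultimately show ?thesis using that m(2) by auto
qed

lemma L1ball_rebalance:
  fixes a0 b0 :: "'a \<Rightarrow> 'b::real_normed_vector"
  assumes lam: "0 < lam" "0 < nu" "lam + nu = 1" and a0: "a0 \<in> L1 M" and b0: "b0 \<in> L1 M"
    and total: "lam * L1norm M a0 + nu * L1norm M b0 \<le> 1"
  obtains a b where "a \<in> L1ball M" "b \<in> L1ball M"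
    "\<And>\<omega>. lam *\<^sub>R a \<omega> + nu *\<^sub>R b \<omega> = lam *\<^sub>R a0 \<omega> + nu *\<^sub>R b0 \<omega>"
    "L1norm M (\<lambda>\<omega>. a \<omega> - a0 \<omega>) + L1norm M (\<lambda>\<omega>. b \<omega> - b0 \<omega>)
       \<le> max 0 (L1norm M a0 - 1) / nu + max 0 (L1norm M b0 - 1) / lam"
proof -
  consider "L1norm M a0 \<le> 1" "L1norm M b0 \<le> 1" | "1 < L1norm M a0" | "1 < L1norm M b0" by linarith
  then show ?thesis
  proof cases
    case 1
    have "L1norm M (\<lambda>\<omega>. a0 \<omega> - a0 \<omega>) = 0" "L1norm M (\<lambda>\<omega>. b0 \<omega> - b0 \<omega>) = 0"
      by (simp_all add: L1norm_AE_zero)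
    then show ?thesis using that[of a0 b0] 1 a0 b0 lam unfolding L1ball_def by simp
  next
    case 2
    have "lam * 1 < lam * L1norm M a0" using 2 lam(1) by (rule mult_strict_left_mono)
    then have "nu * L1norm M b0 < nu * 1" using total lam(3) by linarith
    then have "max 0 (L1norm M b0 - 1) = 0" using lam(2) by simp
    moreover have "max 0 (L1norm M a0 - 1) = L1norm M a0 - 1" using 2 by simp
    moreover obtain a b where "a \<in> L1ball M" "b \<in> L1ball M"
      "\<And>\<omega>. lam *\<^sub>R a \<omega> + nu *\<^sub>R b \<omega> = lam *\<^sub>R a0 \<omega> + nu *\<^sub>R b0 \<omega>"
      "L1norm M (\<lambda>\<omega>. a \<omega> - a0 \<omega>) + L1norm M (\<lambda>\<omega>. b \<omega> - b0 \<omega>) \<le> (L1norm M a0 - 1) / nu"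
      using L1ball_rebalance_excess[OF lam a0 b0 total 2] by blast
    ultimately show ?thesis using that[of a b] by simp
  next
    case 3
    have "nu * 1 < nu * L1norm M b0" using 3 lam(2) by (rule mult_strict_left_mono)
    then have "lam * L1norm M a0 < lam * 1" using total lam(3) by linarith
    then have "max 0 (L1norm M a0 - 1) = 0" using lam(1) by simp
    moreover have "max 0 (L1norm M b0 - 1) = L1norm M b0 - 1" using 3 by simp
    moreover have "nu + lam = 1" "nu * L1norm M b0 + lam * L1norm M a0 \<le> 1" using lam(3) total by simp_all
    then obtain b a where "b \<in> L1ball M" "a \<in> L1ball M"
      "\<And>\<omega>. nu *\<^sub>R b \<omega> + lam *\<^sub>R a \<omega> = nu *\<^sub>R b0 \<omega> + lam *\<^sub>R a0 \<omega>"
      "L1norm M (\<lambda>\<omega>. b \<omega> - b0 \<omega>) + L1norm M (\<lambda>\<omega>. a \<omega> - a0 \<omega>) \<le> (L1norm M b0 - 1) / lam"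
      using L1ball_rebalance_excess[OF lam(2,1) _ b0 a0 _ 3] by blast
    ultimately show ?thesis using that[of a b] by (simp add: add.commute)
  qed
qed

lemma L1ball_rebalance_weak:
  fixes a0 b0 :: "'a \<Rightarrow> 'b::real_normed_vector"
  assumes lam: "0 < lam" "0 < nu" "lam + nu = 1" and a0: "a0 \<in> L1 M" and b0: "b0 \<in> L1 M"
    and total: "lam * L1norm M a0 + nu * L1norm M b0 \<le> 1"
    and excess: "L1norm M a0 < 1 + \<delta>" "L1norm M b0 < 1 + \<delta>" "0 < \<delta>"
    and F: "F \<subseteq> L1dual M" and C: "C \<ge> 0" "\<forall>\<phi>\<in>F. \<forall>f\<in>L1 M. \<bar>\<phi> f\<bar> \<le> C * L1norm M f"
  obtains a b where "a \<in> L1ball M" "b \<in> L1ball M"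
    "\<And>\<omega>. lam *\<^sub>R a \<omega> + nu *\<^sub>R b \<omega> = lam *\<^sub>R a0 \<omega> + nu *\<^sub>R b0 \<omega>"
    "\<forall>\<phi>\<in>F. \<bar>\<phi> a - \<phi> a0\<bar> \<le> C * (\<delta> / nu + \<delta> / lam) \<and> \<bar>\<phi> b - \<phi> b0\<bar> \<le> C * (\<delta> / nu + \<delta> / lam)"
proof -
  obtain a b where ab: "a \<in> L1ball M" "b \<in> L1ball M"
    "\<And>\<omega>. lam *\<^sub>R a \<omega> + nu *\<^sub>R b \<omega> = lam *\<^sub>R a0 \<omega> + nu *\<^sub>R b0 \<omega>"
    "L1norm M (\<lambda>\<omega>. a \<omega> - a0 \<omega>) + L1norm M (\<lambda>\<omega>. b \<omega> - b0 \<omega>)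
       \<le> max 0 (L1norm M a0 - 1) / nu + max 0 (L1norm M b0 - 1) / lam"
    using L1ball_rebalance[OF lam a0 b0 total] by blast
  have "max 0 (L1norm M a0 - 1) / nu + max 0 (L1norm M b0 - 1) / lam \<le> \<delta> / nu + \<delta> / lam"
    using excess lam by (intro add_mono divide_right_mono) auto
  then have dev: "L1norm M (\<lambda>\<omega>. a \<omega> - a0 \<omega>) \<le> \<delta> / nu + \<delta> / lam"
    "L1norm M (\<lambda>\<omega>. b \<omega> - b0 \<omega>) \<le> \<delta> / nu + \<delta> / lam"
    using ab(4) L1norm_nonneg[of M "\<lambda>\<omega>. a \<omega> - a0 \<omega>"] L1norm_nonneg[of M "\<lambda>\<omega>. b \<omega> - b0 \<omega>"] by linarith+
  have moved: "\<bar>\<phi> c - \<phi> c0\<bar> \<le> C * (\<delta> / nu + \<delta> / lam)"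
    if "\<phi> \<in> F" "c \<in> L1ball M" "c0 \<in> L1 M" "L1norm M (\<lambda>\<omega>. c \<omega> - c0 \<omega>) \<le> \<delta> / nu + \<delta> / lam" for \<phi> c c0
  proof -
    have c: "c \<in> L1 M" using that(2) by (rule L1ball_imp_L1)
    have "\<bar>\<phi> c - \<phi> c0\<bar> = \<bar>\<phi> (\<lambda>\<omega>. c \<omega> - c0 \<omega>)\<bar>"
      using L1dual_diff[OF complete _ c that(3)] that(1) F by auto
    also have "\<dots> \<le> C * L1norm M (\<lambda>\<omega>. c \<omega> - c0 \<omega>)"
      using C(2) that(1) L1_diff[OF complete c that(3)] by blast
    also have "\<dots> \<le> C * (\<delta> / nu + \<delta> / lam)" using that(4) C(1) by (rule mult_left_mono)
    finally show ?thesis .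
  qed
  show ?thesis using that[OF ab(1-3)] moved[OF _ ab(1) a0 dev(1)] moved[OF _ ab(2) b0 dev(2)] by blast
qed

lemma rescaled_weak_basic_nhd:
  fixes f :: "'a \<Rightarrow> 'b::real_normed_vector"
  assumes a: "a \<in> weak_basic_nhd M F (\<delta> / 2) (L1normalize M f)"
    and f: "f \<in> L1 M" "0 < L1norm M f" "L1norm M f \<le> 1"
    and F: "F \<subseteq> L1dual M" and C: "C \<ge> 0" "\<forall>\<phi>\<in>F. \<forall>g\<in>L1 M. \<bar>\<phi> g\<bar> \<le> C * L1norm M g"
    and k: "0 < k" "k < 1 + \<delta>" "C * \<bar>k - 1\<bar> < \<delta> / 2" and \<delta>: "\<delta> > 0"
  defines "b \<equiv> (\<lambda>\<omega>. (k * L1norm M f) *\<^sub>R a \<omega>)"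
  shows "b \<in> L1 M" "L1norm M b \<le> k * L1norm M f" "L1norm M b < L1norm M f + \<delta>"
    "\<forall>\<phi>\<in>F. \<bar>\<phi> b - \<phi> f\<bar> < \<delta>"
proof -
  let ?g = "L1norm M f"
  have aL: "a \<in> L1 M" and a1: "L1norm M a \<le> 1"
    using a unfolding weak_basic_nhd_def by (auto intro: L1ball_imp_L1 L1ball_imp_L1norm_le)
  show "b \<in> L1 M" unfolding b_def by (rule L1_scaleR[OF complete aL])
  show norm: "L1norm M b \<le> k * ?g"
    unfolding b_def using L1norm_scaleR[OF complete aL, of "k * ?g"] mult_left_mono[OF a1, of "k * ?g"] k f(2)
    by simp
  have "?g * \<delta> \<le> \<delta>" using f(3) \<delta> by (simp add: mult_left_le_one_le)
  then have "k * ?g < ?g + \<delta>" using mult_strict_right_mono[OF k(2) f(2)] by (simp add: algebra_simps)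
  with norm show "L1norm M b < ?g + \<delta>" by linarith
  show "\<forall>\<phi>\<in>F. \<bar>\<phi> b - \<phi> f\<bar> < \<delta>"
  proof
    fix \<phi>
    assume "\<phi> \<in> F"
    then have \<phi>: "\<phi> \<in> L1dual M" using F by blast
    let ?p = "\<phi> a" and ?q = "\<phi> (L1normalize M f)"
    have "\<phi> b - \<phi> f = ?g * ((k - 1) * ?p + (?p - ?q))"
      unfolding b_def L1dual_scaleR[OF \<phi> aL] L1dual_L1normalize[OF complete \<phi> f(1)]
      using f(2) by (simp add: algebra_simps)
    moreover have "\<bar>(k - 1) * ?p + (?p - ?q)\<bar> < \<delta>"
    proof -
      have "\<bar>?p\<bar> \<le> C * L1norm M a" using C(2) \<open>\<phi> \<in> F\<close> aL by blast
      also have "\<dots> \<le> C" using a1 C(1) by (simp add: mult_left_le)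
      finally have "\<bar>k - 1\<bar> * \<bar>?p\<bar> \<le> \<bar>k - 1\<bar> * C" by (simp add: mult_left_mono)
      then have "\<bar>(k - 1) * ?p\<bar> < \<delta> / 2" using k(3) by (simp add: abs_mult mult.commute)
      moreover have "\<bar>?p - ?q\<bar> < \<delta> / 2" using a \<open>\<phi> \<in> F\<close> unfolding weak_basic_nhd_def by blast
      ultimately show ?thesis by (simp only: abs_less_iff) linarith
    qed
    ultimately show "\<bar>\<phi> b - \<phi> f\<bar> < \<delta>"
      using mult_left_le_one_le[of "\<bar>(k - 1) * ?p + (?p - ?q)\<bar>" ?g] f(2,3) by (simp add: abs_mult)
  qed
qed

end

text \<open>Unlike a decomposition inside lam U + nu V, the pieces a and b need not lie in the unit
  ball; the excess of norm is removed afterwards by rebalancing.\<close>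
definition approx_decomposition ::
    "'a measure \<Rightarrow> real \<Rightarrow> real \<Rightarrow> ('c \<Rightarrow> 'a \<Rightarrow> 'b::real_normed_vector) \<Rightarrow> 'c filter \<Rightarrow>
      ('a \<Rightarrow> 'b) \<Rightarrow> ('a \<Rightarrow> 'b) \<Rightarrow> bool" where
  "approx_decomposition M lam nu g net u v \<longleftrightarrow>
     (\<forall>F \<delta>. finite F \<and> F \<subseteq> L1dual M \<and> \<delta> > 0 \<longrightarrow>
       (\<forall>\<^sub>F w in net. \<exists>a b. a \<in> L1 M \<and> b \<in> L1 M \<and>
          (AE \<omega> in M. g w \<omega> = lam *\<^sub>R a \<omega> + nu *\<^sub>R b \<omega>) \<and>
          lam * L1norm M a + nu * L1norm M b \<le> L1norm M (g w) \<and>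
          L1norm M a < L1norm M u + \<delta> \<and> L1norm M b < L1norm M v + \<delta> \<and>
          (\<forall>\<phi>\<in>F. \<bar>\<phi> a - \<phi> u\<bar> < \<delta> \<and> \<bar>\<phi> b - \<phi> v\<bar> < \<delta>)))"

lemma eventually_in_L1comb2:
  fixes u v :: "'a \<Rightarrow> 'b::real_normed_vector"
  assumes complete: "complete_measure M" and lam: "0 < lam" "0 < nu" "lam + nu = 1"
    and U: "rel_weak_open M U" "u \<in> U" and V: "rel_weak_open M V" "v \<in> V"
    and ball: "\<forall>\<^sub>F w in net. w \<in> L1ball M"
    and approx: "approx_decomposition M lam nu (\<lambda>w. w) net u v"
  shows "\<forall>\<^sub>F w in net. w \<in> L1comb M 2 (\<lambda>k. if k = 0 then lam else nu) (\<lambda>k. if k = 0 then U else V)"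
proof -
  obtain FU eU where FU: "finite FU" "FU \<subseteq> L1dual M" "eU > 0"
    "{h \<in> L1ball M. \<forall>\<phi>\<in>FU. \<bar>\<phi> h - \<phi> u\<bar> < eU} \<subseteq> U"
    using U unfolding rel_weak_open_def by blast
  obtain FV eV where FV: "finite FV" "FV \<subseteq> L1dual M" "eV > 0"
    "{h \<in> L1ball M. \<forall>\<phi>\<in>FV. \<bar>\<phi> h - \<phi> v\<bar> < eV} \<subseteq> V"
    using V unfolding rel_weak_open_def by blast
  define F where "F = FU \<union> FV"
  define e where "e = min eU eV"
  have F: "finite F" "F \<subseteq> L1dual M" and e: "e > 0" using FU FV unfolding F_def e_def by auto
  obtain C where C: "C \<ge> 0" "\<forall>\<phi>\<in>F. \<forall>f\<in>L1 M. \<bar>\<phi> f\<bar> \<le> C * L1norm M f"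
    using L1dual_finite_bound[OF F] by blast
  define K where "K = 1 + C * (1 / nu + 1 / lam)"
  have K: "K > 0" unfolding K_def using C(1) lam by (simp add: add_pos_nonneg)
  define \<delta> where "\<delta> = e / (2 * K)"
  have "\<delta> + C * (\<delta> / nu + \<delta> / lam) = \<delta> * K" unfolding K_def by (simp add: algebra_simps)
  also have "\<dots> < e" unfolding \<delta>_def using K e by simp
  finally have \<delta>: "\<delta> > 0" "\<delta> + C * (\<delta> / nu + \<delta> / lam) < e" using K e by (simp_all add: \<delta>_def)
  have "\<forall>\<^sub>F w in net. \<exists>a0 b0. a0 \<in> L1 M \<and> b0 \<in> L1 M \<and>
      (AE \<omega> in M. w \<omega> = lam *\<^sub>R a0 \<omega> + nu *\<^sub>R b0 \<omega>) \<and>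
      lam * L1norm M a0 + nu * L1norm M b0 \<le> L1norm M w \<and>
      L1norm M a0 < L1norm M u + \<delta> \<and> L1norm M b0 < L1norm M v + \<delta> \<and>
      (\<forall>\<phi>\<in>F. \<bar>\<phi> a0 - \<phi> u\<bar> < \<delta> \<and> \<bar>\<phi> b0 - \<phi> v\<bar> < \<delta>)"
    using approx F \<delta>(1) unfolding approx_decomposition_def by blast
  with ball show ?thesis
  proof eventually_elim
    case (elim w)
    then obtain a0 b0 where a0: "a0 \<in> L1 M" and b0: "b0 \<in> L1 M"
      and split: "AE \<omega> in M. w \<omega> = lam *\<^sub>R a0 \<omega> + nu *\<^sub>R b0 \<omega>"
      and total: "lam * L1norm M a0 + nu * L1norm M b0 \<le> L1norm M w"
      and norms: "L1norm M a0 < L1norm M u + \<delta>" "L1norm M b0 < L1norm M v + \<delta>"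
      and weak: "\<forall>\<phi>\<in>F. \<bar>\<phi> a0 - \<phi> u\<bar> < \<delta> \<and> \<bar>\<phi> b0 - \<phi> v\<bar> < \<delta>"
      by blast
    have "L1norm M u \<le> 1" "L1norm M v \<le> 1"
      using U V unfolding rel_weak_open_def L1ball_def by auto
    then have excess: "L1norm M a0 < 1 + \<delta>" "L1norm M b0 < 1 + \<delta>" using norms by linarith+
    have "lam * L1norm M a0 + nu * L1norm M b0 \<le> 1"
      using total L1ball_imp_L1norm_le[OF elim(1)] by linarith
    then obtain a b where ab: "a \<in> L1ball M" "b \<in> L1ball M"
      "\<And>\<omega>. lam *\<^sub>R a \<omega> + nu *\<^sub>R b \<omega> = lam *\<^sub>R a0 \<omega> + nu *\<^sub>R b0 \<omega>"
      "\<forall>\<phi>\<in>F. \<bar>\<phi> a - \<phi> a0\<bar> \<le> C * (\<delta> / nu + \<delta> / lam) \<and> \<bar>\<phi> b - \<phi> b0\<bar> \<le> C * (\<delta> / nu + \<delta> / lam)"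
      using L1ball_rebalance_weak[OF complete lam a0 b0 _ excess \<delta>(1) F(2) C] by blast
    have close: "\<bar>\<phi> a - \<phi> u\<bar> < e \<and> \<bar>\<phi> b - \<phi> v\<bar> < e" if "\<phi> \<in> F" for \<phi>
    proof -
      have "\<bar>\<phi> a - \<phi> a0\<bar> \<le> C * (\<delta> / nu + \<delta> / lam)" "\<bar>\<phi> b - \<phi> b0\<bar> \<le> C * (\<delta> / nu + \<delta> / lam)"
        "\<bar>\<phi> a0 - \<phi> u\<bar> < \<delta>" "\<bar>\<phi> b0 - \<phi> v\<bar> < \<delta>"
        using ab(4) weak that by auto
      then show ?thesis using \<delta>(2) by (simp only: abs_le_iff abs_less_iff) linarith
    qed
    have "a \<in> {h \<in> L1ball M. \<forall>\<phi>\<in>FU. \<bar>\<phi> h - \<phi> u\<bar> < eU}"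
      using ab(1) close unfolding F_def e_def by auto
    moreover have "b \<in> {h \<in> L1ball M. \<forall>\<phi>\<in>FV. \<bar>\<phi> h - \<phi> v\<bar> < eV}"
      using ab(2) close unfolding F_def e_def by auto
    ultimately have "a \<in> U" "b \<in> V" using FU(4) FV(4) by blast+
    moreover have "L1eq M w (\<lambda>\<omega>. lam *\<^sub>R a \<omega> + nu *\<^sub>R b \<omega>)"
      using split unfolding L1eq_def ab(3) .
    ultimately show ?case unfolding mem_L1comb2_iff using L1ball_imp_L1[OF elim(1)] by blast
  qed
qed

section \<open>Splitting a combination according to the supports\<close>

lemma sets_zero_set:
  fixes f :: "'a \<Rightarrow> 'b::{zero, t1_space}"
  shows "f \<in> borel_measurable M \<Longrightarrow> {\<omega> \<in> space M. f \<omega> = 0} \<in> sets M"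
  using measurable_sets[OF _ borel_closed[OF closed_singleton[of 0]], of f M]
  by (simp add: vimage_def Int_def conj_commute)

text \<open>This is literally the hypothesis of the theorem.\<close>
definition L1_CWO_same_support :: "'a measure \<Rightarrow> ('a \<Rightarrow> 'b::real_normed_vector) itself \<Rightarrow> bool" where
  "L1_CWO_same_support M _ \<longleftrightarrow>
     (\<forall>(x :: 'a \<Rightarrow> 'b) y z lam nu U V.
        x \<in> L1sphere M \<and> y \<in> L1sphere M \<and> z \<in> L1sphere M \<and>
        {\<omega> \<in> space M. (x \<omega> \<noteq> 0 \<and> y \<omega> = 0) \<or> (x \<omega> = 0 \<and> y \<omega> \<noteq> 0)} = {} \<and>
        0 < lam \<and> lam < 1 \<and> 0 < nu \<and> nu < 1 \<and> lam + nu = 1 \<and>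
        L1eq M (\<lambda>\<omega>. lam *\<^sub>R x \<omega> + nu *\<^sub>R y \<omega>) z \<and>
        rel_weak_nhd M U x \<and> L1saturated M U \<and>
        rel_weak_nhd M V y \<and> L1saturated M V
        \<longrightarrow> (\<exists>W. rel_weak_nhd M W z \<and> L1saturated M W \<and>
               W \<subseteq> L1comb M 2 (\<lambda>k. if k = 0 then lam else nu) (\<lambda>k. if k = 0 then U else V)))"

locale L1_split =
  fixes M :: "'a measure" and u v x :: "'a \<Rightarrow> 'b::real_normed_vector" and lam nu :: real
  assumes complete: "complete_measure M"
    and lam: "0 < lam" "0 < nu" "lam + nu = 1"
    and u: "u \<in> L1ball M" and v: "v \<in> L1ball M"
    and x: "x \<in> L1sphere M" and x_eq: "L1eq M x (\<lambda>\<omega>. lam *\<^sub>R u \<omega> + nu *\<^sub>R v \<omega>)"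
begin

definition "A = {\<omega> \<in> space M. u \<omega> \<noteq> 0 \<and> v \<omega> = 0}"
definition "B = {\<omega> \<in> space M. u \<omega> = 0 \<and> v \<omega> \<noteq> 0}"
definition "E = space M - (A \<union> B)"

lemma L1_uvx: "u \<in> L1 M" "v \<in> L1 M" "x \<in> L1 M"
  using u v x L1sphere_subset_L1ball by (auto intro: L1ball_imp_L1)

lemma sets_ABE: "A \<in> sets M" "B \<in> sets M" "E \<in> sets M"
proof -
  have "{\<omega> \<in> space M. u \<omega> = 0} \<in> sets M" "{\<omega> \<in> space M. v \<omega> = 0} \<in> sets M"
    using L1_imp_borel[OF complete L1_uvx(1)] L1_imp_borel[OF complete L1_uvx(2)] by (auto intro: sets_zero_set)
  moreover have "A = {\<omega> \<in> space M. v \<omega> = 0} - {\<omega> \<in> space M. u \<omega> = 0}"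
    "B = {\<omega> \<in> space M. u \<omega> = 0} - {\<omega> \<in> space M. v \<omega> = 0}"
    unfolding A_def B_def by auto
  ultimately show "A \<in> sets M" "B \<in> sets M" "E \<in> sets M" unfolding E_def by auto
qed

lemma L1_zero_outside_ABE: "g \<in> L1 M \<Longrightarrow> S \<in> {A, B, E} \<Longrightarrow> zero_outside S g \<in> L1 M"
  using L1_zero_outside[OF complete] sets_ABE by blast

lemma zero_outside_ABE: "\<omega> \<in> space M \<Longrightarrow> g \<omega> = zero_outside A g \<omega> + zero_outside B g \<omega> + zero_outside E g \<omega>"
  unfolding zero_outside_def E_def A_def B_def by (auto simp: indicator_def)

lemma L1norm_ABE: "g \<in> L1 M \<Longrightarrow> L1norm M g = L1norm M (zero_outside A g) + L1norm M (zero_outside B g) + L1norm M (zero_outside E g)"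
  using L1norm_split[OF complete _ sets.Un[OF sets_ABE(1,2)], of g]
    L1norm_zero_outside_Un[OF complete _ sets_ABE(1,2), of g]
  unfolding E_def A_def B_def by auto

lemma same_support_E: "\<omega> \<in> space M \<Longrightarrow> zero_outside E u \<omega> = 0 \<longleftrightarrow> zero_outside E v \<omega> = 0"
  unfolding zero_outside_def E_def A_def B_def by (auto simp: indicator_def)

lemma zero_outside_B_u: "zero_outside B u = (\<lambda>\<omega>. 0)"
  unfolding zero_outside_def B_def by (auto simp: indicator_def)

lemma L1norm_uv: "L1norm M u = 1" "L1norm M v = 1"
  using L1sphere_convex_combination[OF complete lam u v x_eq] x unfolding L1sphere_def by auto

lemma L1norm_u_split: "L1norm M u = L1norm M (zero_outside A u) + L1norm M (zero_outside E u)"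
  using L1norm_ABE[OF L1_uvx(1)] by (simp add: zero_outside_B_u L1norm_AE_zero)

lemma L1dual_u_split:
  assumes "\<phi> \<in> L1dual M"
  shows "\<phi> u = \<phi> (zero_outside A u) + \<phi> (zero_outside E u)"
proof -
  have "L1eq M u (\<lambda>\<omega>. zero_outside A u \<omega> + zero_outside E u \<omega>)"
    unfolding L1eq_def using zero_outside_ABE[of _ u] by (simp add: zero_outside_B_u)
  then show ?thesis
    using L1dual_AE_cong[OF complete assms L1_uvx(1) L1_add[OF complete]] L1dual_add[OF assms]
      L1_zero_outside_ABE[OF L1_uvx(1)] by simp
qed

lemma x_A_eq: "L1eq M (zero_outside A x) (\<lambda>\<omega>. lam *\<^sub>R zero_outside A u \<omega>)"
  using x_eq unfolding L1eq_def by eventually_elim (auto simp: zero_outside_def A_def indicator_def)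

lemma x_E_eq: "L1eq M (zero_outside E x) (\<lambda>\<omega>. lam *\<^sub>R zero_outside E u \<omega> + nu *\<^sub>R zero_outside E v \<omega>)"
  using x_eq unfolding L1eq_def by eventually_elim (simp add: zero_outside_def scaleR_add_right ac_simps)

lemma L1norm_x_A: "L1norm M (zero_outside A x) = lam * L1norm M (zero_outside A u)"
  using L1norm_AE_cong[OF complete L1_scaleR[OF complete L1_zero_outside_ABE[OF L1_uvx(1)]] x_A_eq] lam
  by (simp add: L1norm_scaleR[OF complete L1_zero_outside_ABE[OF L1_uvx(1)]])

lemma L1dual_x_A: "\<phi> \<in> L1dual M \<Longrightarrow> \<phi> (zero_outside A x) = lam * \<phi> (zero_outside A u)"
  using L1dual_AE_cong[OF complete _ L1_zero_outside_ABE[OF L1_uvx(3)] L1_scaleR[OF complete] x_A_eq]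
    L1dual_scaleR L1_zero_outside_ABE[OF L1_uvx(1)] by (metis insertI1)

lemma swap: "L1_split M v u x nu lam"
  using complete lam u v x x_eq unfolding L1_split_def L1eq_def by (auto simp: add.commute)

lemma swap_ABE: "L1_split.A M v u = B" "L1_split.B M v u = A" "L1_split.E M v u = E"
  unfolding L1_split.A_def[OF swap] L1_split.B_def[OF swap] L1_split.E_def[OF swap] A_def B_def E_def
  by auto

lemma eventually_A_part:
  assumes F: "finite F" "F \<subseteq> L1dual M" and \<delta>: "\<delta> > 0"
  shows "\<forall>\<^sub>F w in weak_nhds M x. L1norm M (zero_outside A w) / lam < L1norm M (zero_outside A u) + \<delta> \<and>
    (\<forall>\<phi>\<in>F. \<bar>\<phi> (zero_outside A w) / lam - \<phi> (zero_outside A u)\<bar> < \<delta>)"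
proof -
  have "((\<lambda>w. L1norm M (zero_outside A w)) \<longlongrightarrow> lam * L1norm M (zero_outside A u)) (weak_nhds M x)"
    using tendsto_L1norm_zero_outside[OF complete x sets_ABE(1)] by (simp add: L1norm_x_A)
  then have "((\<lambda>w. L1norm M (zero_outside A w) / lam) \<longlongrightarrow> lam * L1norm M (zero_outside A u) / lam) (weak_nhds M x)"
    using lam(1) by (intro tendsto_divide tendsto_const) auto
  then have "\<forall>\<^sub>F w in weak_nhds M x. L1norm M (zero_outside A w) / lam < L1norm M (zero_outside A u) + \<delta>"
    using \<delta> lam(1) by (intro order_tendstoD(2)) auto
  moreover have "\<forall>\<phi>\<in>F. \<forall>\<^sub>F w in weak_nhds M x. \<bar>\<phi> (zero_outside A w) / lam - \<phi> (zero_outside A u)\<bar> < \<delta>"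
  proof
    fix \<phi>
    assume "\<phi> \<in> F"
    then have \<phi>: "\<phi> \<in> L1dual M" using F(2) by blast
    have "((\<lambda>w. \<phi> (zero_outside A w) / lam) \<longlongrightarrow> \<phi> (zero_outside A x) / lam) (weak_nhds M x)"
      using lam(1) by (intro tendsto_divide tendsto_const
        tendsto_L1dual_weak_nhds[OF L1dual_zero_outside[OF complete \<phi> sets_ABE(1)]]) auto
    then have "((\<lambda>w. \<phi> (zero_outside A w) / lam) \<longlongrightarrow> \<phi> (zero_outside A u)) (weak_nhds M x)"
      using lam(1) by (simp add: L1dual_x_A[OF \<phi>])
    from tendstoD[OF this \<delta>]
    show "\<forall>\<^sub>F w in weak_nhds M x. \<bar>\<phi> (zero_outside A w) / lam - \<phi> (zero_outside A u)\<bar> < \<delta>"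
      by (simp add: dist_real_def)
  qed
  then have "\<forall>\<^sub>F w in weak_nhds M x. \<forall>\<phi>\<in>F. \<bar>\<phi> (zero_outside A w) / lam - \<phi> (zero_outside A u)\<bar> < \<delta>"
    by (rule eventually_ball_finite[OF F(1)])
  ultimately show ?thesis by (rule eventually_conj)
qed

lemma A_part_extend:
  assumes w: "w \<in> L1 M" and aE: "aE \<in> L1 M" and F: "F \<subseteq> L1dual M"
    and A_close: "L1norm M (zero_outside A w) / lam < L1norm M (zero_outside A u) + \<delta> / 2"
      "\<forall>\<phi>\<in>F. \<bar>\<phi> (zero_outside A w) / lam - \<phi> (zero_outside A u)\<bar> < \<delta> / 2"
    and E_close: "L1norm M aE < L1norm M (zero_outside E u) + \<delta> / 2"
      "\<forall>\<phi>\<in>F. \<bar>\<phi> aE - \<phi> (zero_outside E u)\<bar> < \<delta> / 2"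
  defines "a \<equiv> (\<lambda>\<omega>. (1 / lam) *\<^sub>R zero_outside A w \<omega> + aE \<omega>)"
  shows "a \<in> L1 M" "lam * L1norm M a \<le> L1norm M (zero_outside A w) + lam * L1norm M aE"
    "L1norm M a < L1norm M u + \<delta>" "\<forall>\<phi>\<in>F. \<bar>\<phi> a - \<phi> u\<bar> < \<delta>"
proof -
  have wA: "zero_outside A w \<in> L1 M" using L1_zero_outside_ABE[OF w] by simp
  show "a \<in> L1 M" unfolding a_def by (rule L1_add[OF complete L1_scaleR[OF complete wA] aE])
  have norm: "L1norm M a \<le> L1norm M (zero_outside A w) / lam + L1norm M aE"
    unfolding a_def using L1norm_triangle[OF complete L1_scaleR[OF complete wA, of "1 / lam"] aE] lam
    by (simp add: L1norm_scaleR[OF complete wA])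
  then show "lam * L1norm M a \<le> L1norm M (zero_outside A w) + lam * L1norm M aE"
    using mult_left_mono[OF norm, of lam] lam by (simp add: algebra_simps)
  show "L1norm M a < L1norm M u + \<delta>" using norm A_close(1) E_close(1) L1norm_u_split by linarith
  show "\<forall>\<phi>\<in>F. \<bar>\<phi> a - \<phi> u\<bar> < \<delta>"
  proof
    fix \<phi>
    assume "\<phi> \<in> F"
    then have \<phi>: "\<phi> \<in> L1dual M" using F by blast
    have "\<phi> a - \<phi> u = (\<phi> (zero_outside A w) / lam - \<phi> (zero_outside A u)) + (\<phi> aE - \<phi> (zero_outside E u))"
      unfolding a_def L1dual_add[OF \<phi> L1_scaleR[OF complete wA] aE] L1dual_scaleR[OF \<phi> wA]
        L1dual_u_split[OF \<phi>] by simp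
    moreover have "\<bar>\<phi> (zero_outside A w) / lam - \<phi> (zero_outside A u)\<bar> < \<delta> / 2"
      "\<bar>\<phi> aE - \<phi> (zero_outside E u)\<bar> < \<delta> / 2"
      using A_close(2) E_close(2) \<open>\<phi> \<in> F\<close> by auto
    ultimately show "\<bar>\<phi> a - \<phi> u\<bar> < \<delta>" by (simp only: abs_less_iff) linarith
  qed
qed

text \<open>On A only u lives and on B only v, so there w is split as lam (w / lam) + nu 0 and as
  lam 0 + nu (w / nu) respectively.\<close>
lemma approx_decomposition_of_E:
  assumes "approx_decomposition M lam nu (zero_outside E) (weak_nhds M x) (zero_outside E u) (zero_outside E v)"
  shows "approx_decomposition M lam nu (\<lambda>w. w) (weak_nhds M x) u v"
  unfolding approx_decomposition_def
proof (intro allI impI)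
  fix F :: "(('a \<Rightarrow> 'b) \<Rightarrow> real) set" and \<delta> :: real
  assume "finite F \<and> F \<subseteq> L1dual M \<and> \<delta> > 0"
  then have F: "finite F" "F \<subseteq> L1dual M" and \<delta>: "\<delta> / 2 > 0" by auto
  interpret swap: L1_split M v u x nu lam by (rule swap)
  have "\<forall>\<^sub>F w in weak_nhds M x. \<exists>a b. a \<in> L1 M \<and> b \<in> L1 M \<and>
      (AE \<omega> in M. zero_outside E w \<omega> = lam *\<^sub>R a \<omega> + nu *\<^sub>R b \<omega>) \<and>
      lam * L1norm M a + nu * L1norm M b \<le> L1norm M (zero_outside E w) \<and>
      L1norm M a < L1norm M (zero_outside E u) + \<delta> / 2 \<and> L1norm M b < L1norm M (zero_outside E v) + \<delta> / 2 \<and>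
      (\<forall>\<phi>\<in>F. \<bar>\<phi> a - \<phi> (zero_outside E u)\<bar> < \<delta> / 2 \<and> \<bar>\<phi> b - \<phi> (zero_outside E v)\<bar> < \<delta> / 2)"
    using assms F \<delta> unfolding approx_decomposition_def by blast
  moreover note eventually_A_part[OF F \<delta>] swap.eventually_A_part[OF F \<delta>, unfolded swap_ABE]
    eventually_weak_nhds_L1ball[of M x]
  ultimately show "\<forall>\<^sub>F w in weak_nhds M x. \<exists>a b. a \<in> L1 M \<and> b \<in> L1 M \<and>
      (AE \<omega> in M. w \<omega> = lam *\<^sub>R a \<omega> + nu *\<^sub>R b \<omega>) \<and>
      lam * L1norm M a + nu * L1norm M b \<le> L1norm M w \<and>
      L1norm M a < L1norm M u + \<delta> \<and> L1norm M b < L1norm M v + \<delta> \<and>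
      (\<forall>\<phi>\<in>F. \<bar>\<phi> a - \<phi> u\<bar> < \<delta> \<and> \<bar>\<phi> b - \<phi> v\<bar> < \<delta>)"
  proof eventually_elim
    case (elim w)
    then obtain aE bE where aE: "aE \<in> L1 M" and bE: "bE \<in> L1 M"
      and split_E: "AE \<omega> in M. zero_outside E w \<omega> = lam *\<^sub>R aE \<omega> + nu *\<^sub>R bE \<omega>"
      and total_E: "lam * L1norm M aE + nu * L1norm M bE \<le> L1norm M (zero_outside E w)"
      and norms_E: "L1norm M aE < L1norm M (zero_outside E u) + \<delta> / 2"
        "L1norm M bE < L1norm M (zero_outside E v) + \<delta> / 2"
      and weak_E: "\<forall>\<phi>\<in>F. \<bar>\<phi> aE - \<phi> (zero_outside E u)\<bar> < \<delta> / 2"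
        "\<forall>\<phi>\<in>F. \<bar>\<phi> bE - \<phi> (zero_outside E v)\<bar> < \<delta> / 2"
      by blast
    have w: "w \<in> L1 M" using elim(4) by (rule L1ball_imp_L1)
    define a b where "a = (\<lambda>\<omega>. (1 / lam) *\<^sub>R zero_outside A w \<omega> + aE \<omega>)"
      and "b = (\<lambda>\<omega>. (1 / nu) *\<^sub>R zero_outside B w \<omega> + bE \<omega>)"
    have pa: "a \<in> L1 M" "lam * L1norm M a \<le> L1norm M (zero_outside A w) + lam * L1norm M aE"
      "L1norm M a < L1norm M u + \<delta>" "\<forall>\<phi>\<in>F. \<bar>\<phi> a - \<phi> u\<bar> < \<delta>"
      using A_part_extend[OF w aE F(2) _ _ norms_E(1) weak_E(1)] elim(2) unfolding a_def by auto
    have pb: "b \<in> L1 M" "nu * L1norm M b \<le> L1norm M (zero_outside B w) + nu * L1norm M bE"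
      "L1norm M b < L1norm M v + \<delta>" "\<forall>\<phi>\<in>F. \<bar>\<phi> b - \<phi> v\<bar> < \<delta>"
      using swap.A_part_extend[OF w bE F(2), unfolded swap_ABE, OF _ _ norms_E(2) weak_E(2)] elim(3)
      unfolding b_def by auto
    have "AE \<omega> in M. w \<omega> = lam *\<^sub>R a \<omega> + nu *\<^sub>R b \<omega>"
      using split_E AE_space
    proof eventually_elim
      case (elim \<omega>)
      then show ?case
        using zero_outside_ABE[of \<omega> w] lam unfolding a_def b_def by (simp add: scaleR_add_right)
    qed
    moreover have "lam * L1norm M a + nu * L1norm M b \<le> L1norm M w"
      using pa(2) pb(2) total_E L1norm_ABE[OF w] by linarith
    ultimately show ?case using pa pb by blast
  qed
qed

lemma L1norm_x_E: "L1norm M (zero_outside E x) = lam * L1norm M (zero_outside E u) + nu * L1norm M (zero_outside E v)"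
proof -
  interpret swap: L1_split M v u x nu lam by (rule swap)
  have "1 = lam * L1norm M (zero_outside A u) + nu * L1norm M (zero_outside B v) + L1norm M (zero_outside E x)"
    using L1norm_ABE[OF L1_uvx(3)] x L1norm_x_A swap.L1norm_x_A unfolding L1sphere_def swap_ABE by simp
  moreover have "L1norm M (zero_outside A u) = 1 - L1norm M (zero_outside E u)"
    "L1norm M (zero_outside B v) = 1 - L1norm M (zero_outside E v)"
    using L1norm_u_split swap.L1norm_u_split L1norm_uv unfolding swap_ABE by auto
  ultimately show ?thesis using lam(3) by (simp add: algebra_simps)
qed

lemma L1norm_E_u_eq_0_iff: "L1norm M (zero_outside E u) = 0 \<longleftrightarrow> L1norm M (zero_outside E v) = 0"
proof -
  have "L1norm M (zero_outside E f) = 0 \<longleftrightarrow> (AE \<omega> in M. zero_outside E f \<omega> = 0)" if "f \<in> L1 M" for f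
    using L1norm_eq_0_imp_AE[OF complete L1_zero_outside_ABE[OF that]] L1norm_AE_zero by blast
  moreover have "(AE \<omega> in M. zero_outside E u \<omega> = 0) \<longleftrightarrow> (AE \<omega> in M. zero_outside E v \<omega> = 0)"
    using same_support_E by (intro AE_cong) auto
  ultimately show ?thesis using L1_uvx by blast
qed

lemma approx_decomposition_E_null:
  assumes null: "L1norm M (zero_outside E u) = 0"
  shows "approx_decomposition M lam nu (zero_outside E) (weak_nhds M x) (zero_outside E u) (zero_outside E v)"
  unfolding approx_decomposition_def
proof (intro allI impI)
  fix F :: "(('a \<Rightarrow> 'b) \<Rightarrow> real) set" and \<delta> :: real
  assume "finite F \<and> F \<subseteq> L1dual M \<and> \<delta> > 0"
  then have F: "finite F" "F \<subseteq> L1dual M" and \<delta>: "lam * \<delta> > 0" using lam by auto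
  have null_v: "L1norm M (zero_outside E v) = 0" using null L1norm_E_u_eq_0_iff by simp
  have null_x: "L1norm M (zero_outside E x) = 0" using L1norm_x_E null null_v by simp
  have dual_null: "\<phi> (zero_outside E f) = 0" if "\<phi> \<in> L1dual M" "f \<in> L1 M" "L1norm M (zero_outside E f) = 0" for \<phi> f
    using that L1dual_AE_zero[OF complete _ L1_zero_outside_ABE] L1norm_eq_0_imp_AE[OF complete L1_zero_outside_ABE]
    by blast
  have "\<forall>\<^sub>F w in weak_nhds M x. L1norm M (zero_outside E w) < lam * \<delta>"
    using order_tendstoD(2)[OF tendsto_L1norm_zero_outside[OF complete x sets_ABE(3)]] \<delta> null_x by simp
  moreover have "\<forall>\<^sub>F w in weak_nhds M x. \<forall>\<phi>\<in>F. \<bar>\<phi> (zero_outside E w)\<bar> < lam * \<delta>"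
  proof (rule eventually_ball_finite[OF F(1)], intro ballI)
    fix \<phi>
    assume "\<phi> \<in> F"
    then have \<phi>: "\<phi> \<in> L1dual M" using F(2) by blast
    from tendstoD[OF tendsto_L1dual_weak_nhds[OF L1dual_zero_outside[OF complete \<phi> sets_ABE(3)], of x] \<delta>]
    show "\<forall>\<^sub>F w in weak_nhds M x. \<bar>\<phi> (zero_outside E w)\<bar> < lam * \<delta>"
      using dual_null[OF \<phi> L1_uvx(3) null_x] by (simp add: dist_real_def)
  qed
  moreover note eventually_weak_nhds_L1ball[of M x]
  ultimately show "\<forall>\<^sub>F w in weak_nhds M x. \<exists>a b. a \<in> L1 M \<and> b \<in> L1 M \<and>
      (AE \<omega> in M. zero_outside E w \<omega> = lam *\<^sub>R a \<omega> + nu *\<^sub>R b \<omega>) \<and>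
      lam * L1norm M a + nu * L1norm M b \<le> L1norm M (zero_outside E w) \<and>
      L1norm M a < L1norm M (zero_outside E u) + \<delta> \<and> L1norm M b < L1norm M (zero_outside E v) + \<delta> \<and>
      (\<forall>\<phi>\<in>F. \<bar>\<phi> a - \<phi> (zero_outside E u)\<bar> < \<delta> \<and> \<bar>\<phi> b - \<phi> (zero_outside E v)\<bar> < \<delta>)"
  proof eventually_elim
    case (elim w)
    have wE: "zero_outside E w \<in> L1 M" using L1_zero_outside_ABE[OF L1ball_imp_L1[OF elim(3)]] by simp
    define a where "a = (\<lambda>\<omega>. (1 / lam) *\<^sub>R zero_outside E w \<omega>)"
    have a: "a \<in> L1 M" "L1norm M a = L1norm M (zero_outside E w) / lam"
      unfolding a_def using L1_scaleR[OF complete wE] L1norm_scaleR[OF complete wE] lam by auto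
    have "\<bar>\<phi> a - \<phi> (zero_outside E u)\<bar> < \<delta> \<and> \<bar>\<phi> (\<lambda>\<omega>. 0) - \<phi> (zero_outside E v)\<bar> < \<delta>"
      if "\<phi> \<in> F" for \<phi>
    proof -
      have \<phi>: "\<phi> \<in> L1dual M" using that F(2) by blast
      have "\<phi> a = \<phi> (zero_outside E w) / lam"
        unfolding a_def using L1dual_scaleR[OF \<phi> wE] by simp
      moreover have "\<bar>\<phi> (zero_outside E w)\<bar> < lam * \<delta>" using elim(2) that by blast
      ultimately have "\<bar>\<phi> a\<bar> < \<delta>" using lam(1) by (simp add: abs_divide pos_divide_less_eq mult.commute)
      moreover have "0 < \<delta>" using \<delta> lam(1) by (simp add: zero_less_mult_iff)
      ultimately show ?thesis
        using dual_null[OF \<phi> L1_uvx(1) null] dual_null[OF \<phi> L1_uvx(2) null_v]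
          L1dual_AE_zero[OF complete \<phi> L1_zero[OF complete]] by simp
    qed
    moreover have "AE \<omega> in M. zero_outside E w \<omega> = lam *\<^sub>R a \<omega> + nu *\<^sub>R 0"
      unfolding a_def using lam by simp
    moreover have "L1norm M a < L1norm M (zero_outside E u) + \<delta>"
      using a(2) elim(1) null lam by (simp add: pos_divide_less_eq mult.commute)
    moreover have "lam * L1norm M a + nu * L1norm M (\<lambda>\<omega>. 0) \<le> L1norm M (zero_outside E w)"
      "L1norm M (\<lambda>\<omega>. 0) < L1norm M (zero_outside E v) + \<delta>"
      using a(2) lam \<delta> null_v by (simp_all add: L1norm_AE_zero zero_less_mult_iff)
    ultimately show ?case using a(1) L1_zero[OF complete] by blast
  qed
qed

lemma L1norm_E_le_1: "L1norm M (zero_outside E u) \<le> 1"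
  using L1norm_u_split L1norm_uv(1) L1norm_nonneg[of M "zero_outside A u"] by linarith

lemma L1norm_E_pos:
  assumes "L1norm M (zero_outside E u) \<noteq> 0"
  shows "0 < L1norm M (zero_outside E u)" "0 < L1norm M (zero_outside E v)" "0 < L1norm M (zero_outside E x)"
proof -
  show u: "0 < L1norm M (zero_outside E u)" and v: "0 < L1norm M (zero_outside E v)"
    using assms L1norm_E_u_eq_0_iff L1norm_nonneg[of M] by (metis order_le_less)+
  show "0 < L1norm M (zero_outside E x)" using L1norm_x_E u v lam by (simp add: add_pos_pos)
qed

text \<open>The normalised restrictions of u and v to E have the same support, so the hypothesis
  applies to them.\<close>
lemma CWO_same_support_E:
  fixes F :: "(('a \<Rightarrow> 'b) \<Rightarrow> real) set"
  defines "gu \<equiv> L1norm M (zero_outside E u)" and "gv \<equiv> L1norm M (zero_outside E v)"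
    and "\<xi> \<equiv> L1norm M (zero_outside E x)"
  assumes H: "L1_CWO_same_support M TYPE('a \<Rightarrow> 'b)" and nonnull: "gu \<noteq> 0"
    and F: "finite F" "F \<subseteq> L1dual M" and \<eta>: "\<eta> > 0"
  obtains W where "rel_weak_nhd M W (L1normalize M (zero_outside E x))"
    "W \<subseteq> L1comb M 2 (\<lambda>k. if k = 0 then lam * gu / \<xi> else nu * gv / \<xi>)
       (\<lambda>k. if k = 0 then weak_basic_nhd M F \<eta> (L1normalize M (zero_outside E u))
            else weak_basic_nhd M F \<eta> (L1normalize M (zero_outside E v)))"
proof -
  define u' v' z where "u' = L1normalize M (zero_outside E u)" and "v' = L1normalize M (zero_outside E v)"
    and "z = L1normalize M (zero_outside E x)"
  have pos: "0 < gu" "0 < gv" "0 < \<xi>"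
    using L1norm_E_pos nonnull unfolding gu_def gv_def \<xi>_def by auto
  have spheres: "u' \<in> L1sphere M" "v' \<in> L1sphere M" "z \<in> L1sphere M"
    unfolding u'_def v'_def z_def using pos L1_uvx unfolding gu_def gv_def \<xi>_def
    by (auto intro!: L1sphere_L1normalize[OF complete] L1_zero_outside_ABE)
  have support: "{\<omega> \<in> space M. (u' \<omega> \<noteq> 0 \<and> v' \<omega> = 0) \<or> (u' \<omega> = 0 \<and> v' \<omega> \<noteq> 0)} = {}"
    using same_support_E pos unfolding u'_def v'_def L1normalize_def gu_def gv_def by auto
  have coeffs: "0 < lam * gu / \<xi>" "0 < nu * gv / \<xi>" "lam * gu / \<xi> + nu * gv / \<xi> = 1"
    using pos lam L1norm_x_E unfolding gu_def gv_def \<xi>_def by (simp_all add: add_divide_distrib[symmetric])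
  have coef: "lam * gu / \<xi> * (1 / gu) = 1 / \<xi> * lam" "nu * gv / \<xi> * (1 / gv) = 1 / \<xi> * nu"
    using pos by simp_all
  have comb: "L1eq M (\<lambda>\<omega>. (lam * gu / \<xi>) *\<^sub>R u' \<omega> + (nu * gv / \<xi>) *\<^sub>R v' \<omega>) z"
    using x_E_eq unfolding L1eq_def
    by eventually_elim
      (use coef in \<open>simp add: u'_def v'_def z_def L1normalize_def gu_def[symmetric] gv_def[symmetric]
        \<xi>_def[symmetric] scaleR_add_right\<close>)
  have nhd: "rel_weak_nhd M (weak_basic_nhd M F \<eta> f) f" "L1saturated M (weak_basic_nhd M F \<eta> f)"
    if "f \<in> L1sphere M" for f
    using rel_weak_open_imp_nhd[OF rel_weak_open_weak_basic_nhd[OF F \<eta>] weak_basic_nhd_self[OF _ \<eta>]]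
      rel_weak_open_saturated[OF complete rel_weak_open_weak_basic_nhd[OF F \<eta>]]
      that L1sphere_subset_L1ball by auto
  show ?thesis
    using H[unfolded L1_CWO_same_support_def, rule_format, of u' v' z "lam * gu / \<xi>" "nu * gv / \<xi>"
        "weak_basic_nhd M F \<eta> u'" "weak_basic_nhd M F \<eta> v'"]
      spheres support coeffs comb nhd[OF spheres(1)] nhd[OF spheres(2)] that
    unfolding u'_def v'_def z_def by auto
qed

lemma approx_decomposition_E_nonnull:
  assumes H: "L1_CWO_same_support M TYPE('a \<Rightarrow> 'b)" and nonnull: "L1norm M (zero_outside E u) \<noteq> 0"
  shows "approx_decomposition M lam nu (zero_outside E) (weak_nhds M x) (zero_outside E u) (zero_outside E v)"
  unfolding approx_decomposition_def
proof (intro allI impI)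
  fix F :: "(('a \<Rightarrow> 'b) \<Rightarrow> real) set" and \<delta> :: real
  assume "finite F \<and> F \<subseteq> L1dual M \<and> \<delta> > 0"
  then have F: "finite F" "F \<subseteq> L1dual M" and \<delta>: "\<delta> > 0" "\<delta> / 2 > 0" by auto
  interpret swap: L1_split M v u x nu lam by (rule swap)
  define gu gv \<xi> where "gu = L1norm M (zero_outside E u)" and "gv = L1norm M (zero_outside E v)"
    and "\<xi> = L1norm M (zero_outside E x)"
  have pos: "0 < gu" "0 < gv" "0 < \<xi>" using L1norm_E_pos[OF nonnull] unfolding gu_def gv_def \<xi>_def .
  have le1: "gu \<le> 1" "gv \<le> 1" using L1norm_E_le_1 swap.L1norm_E_le_1 unfolding gu_def gv_def swap_ABE .
  obtain W where W: "rel_weak_nhd M W (L1normalize M (zero_outside E x))"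
    "W \<subseteq> L1comb M 2 (\<lambda>k. if k = 0 then lam * gu / \<xi> else nu * gv / \<xi>)
       (\<lambda>k. if k = 0 then weak_basic_nhd M F (\<delta> / 2) (L1normalize M (zero_outside E u))
            else weak_basic_nhd M F (\<delta> / 2) (L1normalize M (zero_outside E v)))"
    using CWO_same_support_E[OF H nonnull F \<delta>(2)] unfolding gu_def gv_def \<xi>_def .
  obtain C where C: "C \<ge> 0" "\<forall>\<phi>\<in>F. \<forall>f\<in>L1 M. \<bar>\<phi> f\<bar> \<le> C * L1norm M f"
    using L1dual_finite_bound[OF F] by blast
  text \<open>The restriction of w to E is kappa w * norm (x on E) times its normalisation, and
    kappa w tends to one.\<close>
  define \<kappa> where "\<kappa> w = L1norm M (zero_outside E w) / \<xi>" for w :: "'a \<Rightarrow> 'b"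
  have "((\<lambda>w. L1norm M (zero_outside E w) / \<xi>) \<longlongrightarrow> \<xi> / \<xi>) (weak_nhds M x)"
    using pos(3) unfolding \<xi>_def
    by (intro tendsto_divide tendsto_const tendsto_L1norm_zero_outside[OF complete x sets_ABE(3)]) simp
  then have \<kappa>_lim: "(\<kappa> \<longlongrightarrow> 1) (weak_nhds M x)" unfolding \<kappa>_def using pos(3) by simp
  then have "((\<lambda>w. C * \<bar>\<kappa> w - 1\<bar>) \<longlongrightarrow> C * \<bar>1 - 1\<bar>) (weak_nhds M x)" by (intro tendsto_intros)
  then have "\<forall>\<^sub>F w in weak_nhds M x. C * \<bar>\<kappa> w - 1\<bar> < \<delta> / 2" using \<delta>(2) by (intro order_tendstoD(2)) auto
  moreover have "\<forall>\<^sub>F w in weak_nhds M x. 0 < \<kappa> w" "\<forall>\<^sub>F w in weak_nhds M x. \<kappa> w < 1 + \<delta>"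
    using order_tendstoD(1)[OF \<kappa>_lim, of 0] order_tendstoD(2)[OF \<kappa>_lim, of "1 + \<delta>"] \<delta>(1) by auto
  moreover have "\<forall>\<^sub>F w in weak_nhds M x. L1normalize M (zero_outside E w) \<in> W"
    using eventually_L1normalize_zero_outside_in_nhd[OF complete x sets_ABE(3) _ W(1)] pos(3)
    unfolding \<xi>_def by simp
  ultimately show "\<forall>\<^sub>F w in weak_nhds M x. \<exists>a b. a \<in> L1 M \<and> b \<in> L1 M \<and>
      (AE \<omega> in M. zero_outside E w \<omega> = lam *\<^sub>R a \<omega> + nu *\<^sub>R b \<omega>) \<and>
      lam * L1norm M a + nu * L1norm M b \<le> L1norm M (zero_outside E w) \<and>
      L1norm M a < L1norm M (zero_outside E u) + \<delta> \<and> L1norm M b < L1norm M (zero_outside E v) + \<delta> \<and>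
      (\<forall>\<phi>\<in>F. \<bar>\<phi> a - \<phi> (zero_outside E u)\<bar> < \<delta> \<and> \<bar>\<phi> b - \<phi> (zero_outside E v)\<bar> < \<delta>)"
  proof eventually_elim
    case (elim w)
    then have k: "0 < \<kappa> w" "\<kappa> w < 1 + \<delta>" "C * \<bar>\<kappa> w - 1\<bar> < \<delta> / 2" by auto
    obtain a' b' where a': "a' \<in> weak_basic_nhd M F (\<delta> / 2) (L1normalize M (zero_outside E u))"
      and b': "b' \<in> weak_basic_nhd M F (\<delta> / 2) (L1normalize M (zero_outside E v))"
      and split: "L1eq M (L1normalize M (zero_outside E w))
        (\<lambda>\<omega>. (lam * gu / \<xi>) *\<^sub>R a' \<omega> + (nu * gv / \<xi>) *\<^sub>R b' \<omega>)"
      using subsetD[OF W(2) elim(4)] unfolding mem_L1comb2_iff by blast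
    define a b where "a = (\<lambda>\<omega>. (\<kappa> w * gu) *\<^sub>R a' \<omega>)" and "b = (\<lambda>\<omega>. (\<kappa> w * gv) *\<^sub>R b' \<omega>)"
    note rescaled = rescaled_weak_basic_nhd[OF complete _ L1_zero_outside_ABE _ _ F(2) C k \<delta>(1)]
    have pa: "a \<in> L1 M" "L1norm M a \<le> \<kappa> w * gu" "L1norm M a < gu + \<delta>"
      "\<forall>\<phi>\<in>F. \<bar>\<phi> a - \<phi> (zero_outside E u)\<bar> < \<delta>"
      using rescaled[OF a' L1_uvx(1)] pos(1) le1(1) unfolding a_def gu_def by auto
    have pb: "b \<in> L1 M" "L1norm M b \<le> \<kappa> w * gv" "L1norm M b < gv + \<delta>"
      "\<forall>\<phi>\<in>F. \<bar>\<phi> b - \<phi> (zero_outside E v)\<bar> < \<delta>"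
      using rescaled[OF b' L1_uvx(2)] pos(2) le1(2) unfolding b_def gv_def by auto
    have wE: "L1norm M (zero_outside E w) = \<kappa> w * \<xi>" unfolding \<kappa>_def using pos(3) by simp
    have "AE \<omega> in M. zero_outside E w \<omega> = lam *\<^sub>R a \<omega> + nu *\<^sub>R b \<omega>"
      using split unfolding L1eq_def
    proof eventually_elim
      case (elim \<omega>)
      have "zero_outside E w \<omega> = L1norm M (zero_outside E w) *\<^sub>R L1normalize M (zero_outside E w) \<omega>"
        unfolding L1normalize_def using k(1) wE pos(3) by simp
      also have "\<dots> = lam *\<^sub>R a \<omega> + nu *\<^sub>R b \<omega>"
        unfolding elim wE a_def b_def using pos(3) by (simp add: scaleR_add_right ac_simps)
      finally show ?case .
    qed
    moreover have "lam * L1norm M a + nu * L1norm M b \<le> L1norm M (zero_outside E w)"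
    proof -
      have "lam * L1norm M a \<le> lam * (\<kappa> w * gu)" "nu * L1norm M b \<le> nu * (\<kappa> w * gv)"
        using pa(2) pb(2) lam by (simp_all add: mult_left_mono)
      moreover have "L1norm M (zero_outside E w) = lam * (\<kappa> w * gu) + nu * (\<kappa> w * gv)"
        unfolding wE \<xi>_def L1norm_x_E gu_def gv_def by (simp add: algebra_simps)
      ultimately show ?thesis by linarith
    qed
    ultimately show ?case using pa pb unfolding gu_def gv_def by blast
  qed
qed

end

section \<open>Finitely many sets\<close>

lemma L1comb2_interior:
  fixes u v x :: "'a \<Rightarrow> 'b::real_normed_vector"
  assumes complete: "complete_measure M" and H: "L1_CWO_same_support M TYPE('a \<Rightarrow> 'b)"
    and lam: "0 < lam" "0 < nu" "lam + nu = 1"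
    and U: "rel_weak_open M U" "u \<in> U" and V: "rel_weak_open M V" "v \<in> V"
    and x: "x \<in> L1sphere M" and x_eq: "L1eq M x (\<lambda>\<omega>. lam *\<^sub>R u \<omega> + nu *\<^sub>R v \<omega>)"
  shows "\<exists>G. rel_weak_open M G \<and> x \<in> G \<and>
    G \<subseteq> L1comb M 2 (\<lambda>k. if k = 0 then lam else nu) (\<lambda>k. if k = 0 then U else V)"
proof -
  have "u \<in> L1ball M" "v \<in> L1ball M" using U V unfolding rel_weak_open_def by auto
  then interpret L1_split M u v x lam nu
    using complete lam x x_eq by (simp add: L1_split_def)
  have "approx_decomposition M lam nu (\<lambda>w. w) (weak_nhds M x) u v"
  proof (cases "L1norm M (zero_outside E u) = 0")
    case True
    then show ?thesis by (intro approx_decomposition_of_E approx_decomposition_E_null)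
  next
    case False
    then show ?thesis by (intro approx_decomposition_of_E approx_decomposition_E_nonnull[OF H])
  qed
  then have "\<forall>\<^sub>F w in weak_nhds M x. w \<in> L1comb M 2 (\<lambda>k. if k = 0 then lam else nu) (\<lambda>k. if k = 0 then U else V)"
    by (rule eventually_in_L1comb2[OF complete lam U V eventually_weak_nhds_L1ball])
  then show ?thesis
    using eventually_weak_nhds_imp_rel_weak_open x L1sphere_subset_L1ball by blast
qed

lemma L1comb_Suc_of_L1comb2:
  assumes s: "0 < s" "s = (\<Sum>k<n. lam k)" and G: "G \<subseteq> L1comb M n (\<lambda>k. lam k / s) U"
  shows "L1comb M 2 (\<lambda>k. if k = 0 then s else lam n) (\<lambda>k. if k = 0 then G else U n) \<subseteq> L1comb M (Suc n) lam U"
proof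
  fix w
  assume "w \<in> L1comb M 2 (\<lambda>k. if k = 0 then s else lam n) (\<lambda>k. if k = 0 then G else U n)"
  then obtain y b where w: "w \<in> L1 M" "y \<in> G" "b \<in> U n" "L1eq M w (\<lambda>\<omega>. s *\<^sub>R y \<omega> + lam n *\<^sub>R b \<omega>)"
    unfolding mem_L1comb2_iff by blast
  obtain c where c: "\<forall>k<n. c k \<in> U k" "L1eq M y (\<lambda>\<omega>. \<Sum>k<n. (lam k / s) *\<^sub>R c k \<omega>)"
    using G w(2) unfolding L1comb_def by blast
  define d where "d k = (if k < n then c k else b)" for k
  have "\<forall>k<Suc n. d k \<in> U k" using c(1) w(3) unfolding d_def by (auto simp: less_Suc_eq)
  moreover have "L1eq M w (\<lambda>\<omega>. \<Sum>k<Suc n. lam k *\<^sub>R d k \<omega>)"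
    using w(4) c(2) unfolding L1eq_def
  proof eventually_elim
    case (elim \<omega>)
    have "s *\<^sub>R y \<omega> = (\<Sum>k<n. lam k *\<^sub>R d k \<omega>)"
      unfolding elim(2) d_def using s(1) by (simp add: scaleR_sum_right)
    then show ?case using elim(1) by (simp add: d_def)
  qed
  ultimately show "w \<in> L1comb M (Suc n) lam U" unfolding L1comb_def using w(1) by blast
qed

lemma L1comb_one:
  assumes complete: "complete_measure M" and "lam 0 = 1" "rel_weak_open M (U 0)"
  shows "L1comb M (Suc 0) lam U = U 0"
proof -
  have "U 0 \<subseteq> L1 M" using assms(3) unfolding rel_weak_open_def L1ball_def by blast
  moreover have "w \<in> U 0" if "w \<in> L1 M" "u \<in> U 0" "L1eq M w u" for w u
    using rel_weak_open_saturated[OF complete assms(3)] that unfolding L1saturated_def by blast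
  ultimately show ?thesis
    unfolding L1comb_def using assms(2) by (auto intro!: exI[of _ "\<lambda>_. _"] simp: L1eq_def)
qed

lemma L1ball_convex_sum:
  fixes n :: nat and f :: "nat \<Rightarrow> 'a \<Rightarrow> 'b::real_normed_vector"
  assumes complete: "complete_measure M"
    and "\<forall>k<n. 0 \<le> c k" "(\<Sum>k<n. c k) = 1" "\<forall>k<n. f k \<in> L1ball M"
  shows "(\<lambda>\<omega>. \<Sum>k<n. c k *\<^sub>R f k \<omega>) \<in> L1ball M"
proof -
  have f: "\<And>k. k < n \<Longrightarrow> f k \<in> L1 M" using assms(4) by (auto intro: L1ball_imp_L1)
  have "(\<Sum>k<n. \<bar>c k\<bar> * L1norm M (f k)) \<le> (\<Sum>k<n. c k)"
  proof (rule sum_mono)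
    fix k
    assume "k \<in> {..<n}"
    then show "\<bar>c k\<bar> * L1norm M (f k) \<le> c k"
      using assms(2,4) mult_left_le[of "L1norm M (f k)" "c k"] L1ball_imp_L1norm_le L1norm_nonneg by auto
  qed
  then show ?thesis using L1_sum[OF complete, where m=n and f=f and c=c] f assms(3) unfolding L1ball_def by auto
qed

lemma L1comb_interior:
  fixes U :: "nat \<Rightarrow> ('a \<Rightarrow> 'b::real_normed_vector) set"
  assumes complete: "complete_measure M" and H: "L1_CWO_same_support M TYPE('a \<Rightarrow> 'b)"
  shows "\<forall>k<Suc n. 0 < lam k \<Longrightarrow> (\<Sum>k<Suc n. lam k) = 1 \<Longrightarrow> \<forall>k<Suc n. rel_weak_open M (U k) \<Longrightarrow>
    x \<in> L1comb M (Suc n) lam U \<Longrightarrow> x \<in> L1sphere M \<Longrightarrow>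
    \<exists>G. rel_weak_open M G \<and> x \<in> G \<and> G \<subseteq> L1comb M (Suc n) lam U"
proof (induction n arbitrary: lam U x)
  case 0
  then show ?case using L1comb_one[OF complete, of lam U] by auto
next
  case (Suc n)
  obtain c where c: "\<forall>k<Suc (Suc n). c k \<in> U k" "L1eq M x (\<lambda>\<omega>. \<Sum>k<Suc (Suc n). lam k *\<^sub>R c k \<omega>)"
    using Suc.prems(4) unfolding L1comb_def by blast
  have c_ball: "\<forall>k<Suc (Suc n). c k \<in> L1ball M" using c(1) Suc.prems(3) unfolding rel_weak_open_def by blast
  define s where "s = (\<Sum>k<Suc n. lam k)"
  have "0 < s" unfolding s_def by (rule sum_pos) (use Suc.prems(1) in auto)
  moreover have "s + lam (Suc n) = 1" using Suc.prems(2) unfolding s_def by simp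
  ultimately have s: "0 < s" "s + lam (Suc n) = 1" by auto
  define y where "y = (\<lambda>\<omega>. \<Sum>k<Suc n. (lam k / s) *\<^sub>R c k \<omega>)"
  have weights: "\<forall>k<Suc n. 0 < lam k / s" "(\<Sum>k<Suc n. lam k / s) = 1"
    using Suc.prems(1) s(1) unfolding s_def by (auto simp: sum_divide_distrib[symmetric])
  have "y \<in> L1ball M" unfolding y_def using weights c_ball by (intro L1ball_convex_sum[OF complete]) auto
  moreover have "s *\<^sub>R y \<omega> = (\<Sum>k<Suc n. lam k *\<^sub>R c k \<omega>)" for \<omega>
    unfolding y_def scaleR_sum_right using s(1) by simp
  then have x_eq: "L1eq M x (\<lambda>\<omega>. s *\<^sub>R y \<omega> + lam (Suc n) *\<^sub>R c (Suc n) \<omega>)"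
    using c(2) unfolding L1eq_def by simp
  ultimately have "y \<in> L1sphere M"
    using L1sphere_convex_combination(1)[OF complete s(1) _ s(2) _ _ _ L1sphere_norm[OF Suc.prems(5)]]
      c_ball Suc.prems(1) by auto
  moreover have "y \<in> L1comb M (Suc n) (\<lambda>k. lam k / s) U"
  proof -
    have "y \<in> L1 M" using \<open>y \<in> L1ball M\<close> by (rule L1ball_imp_L1)
    moreover have "\<forall>k<Suc n. c k \<in> U k" using c(1) by simp
    ultimately show ?thesis unfolding L1comb_def L1eq_def by (auto intro!: exI[of _ c] simp: y_def)
  qed
  ultimately obtain G' where G': "rel_weak_open M G'" "y \<in> G'" "G' \<subseteq> L1comb M (Suc n) (\<lambda>k. lam k / s) U"
    using Suc.IH[of "\<lambda>k. lam k / s" U y] weights Suc.prems(3) by auto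
  have last: "0 < lam (Suc n)" "rel_weak_open M (U (Suc n))" "c (Suc n) \<in> U (Suc n)"
    using Suc.prems(1,3) c(1) by auto
  obtain G where "rel_weak_open M G" "x \<in> G"
    "G \<subseteq> L1comb M 2 (\<lambda>k. if k = 0 then s else lam (Suc n)) (\<lambda>k. if k = 0 then G' else U (Suc n))"
    using L1comb2_interior[OF complete H s(1) last(1) s(2) G'(1,2) last(2,3) Suc.prems(5) x_eq] by blast
  then show ?case using L1comb_Suc_of_L1comb2[OF s(1) s_def G'(3)] by blast
qed

theorem lemma2p1:
  fixes M :: "'a measure"
  assumes "complete_measure M"
    and "emeasure M (space M) \<noteq> 0"
    and "\<forall>(x :: 'a \<Rightarrow> 'b::banach) y z lam nu U V.
           x \<in> L1sphere M \<and> y \<in> L1sphere M \<and> z \<in> L1sphere M \<and>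
           {\<omega> \<in> space M. (x \<omega> \<noteq> 0 \<and> y \<omega> = 0) \<or> (x \<omega> = 0 \<and> y \<omega> \<noteq> 0)} = {} \<and>
           0 < lam \<and> lam < 1 \<and> 0 < nu \<and> nu < 1 \<and> lam + nu = 1 \<and>
           L1eq M (\<lambda>\<omega>. lam *\<^sub>R x \<omega> + nu *\<^sub>R y \<omega>) z \<and>
           rel_weak_nhd M U x \<and> L1saturated M U \<and>
           rel_weak_nhd M V y \<and> L1saturated M V
           \<longrightarrow> (\<exists>W. rel_weak_nhd M W z \<and> L1saturated M W \<and>
                  W \<subseteq> L1comb M 2 (\<lambda>k. if k = 0 then lam else nu)
                                    (\<lambda>k. if k = 0 then U else V))"
  shows "L1_CWO_S M TYPE('a \<Rightarrow> 'b)"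
  unfolding L1_CWO_S_def
proof (intro allI impI ballI)
  fix m lam and U :: "nat \<Rightarrow> ('a \<Rightarrow> 'b) set" and x
  assume h: "(\<forall>k<m. 0 < lam k) \<and> (\<Sum>k<m. lam k) = 1 \<and> (\<forall>k<m. rel_weak_open M (U k))"
    and x: "x \<in> L1comb M m lam U \<inter> L1sphere M"
  have H: "L1_CWO_same_support M TYPE('a \<Rightarrow> 'b)"
    using assms(3) unfolding L1_CWO_same_support_def .
  obtain n where "m = Suc n" using h by (cases m) auto
  then show "\<exists>G. rel_weak_open M G \<and> x \<in> G \<and> G \<subseteq> L1comb M m lam U"
    using L1comb_interior[OF assms(1) H] h x by blast
qed

end
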